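(* Let $p>800$ be a prime and let $A\subseteq\mathbb{Z}_p^2$ with $|A|=p+\mathrm{Ol}(\mathbb{Z}_p)$. For each subgroup $U\le\mathbb{Z}_p^2$ with $U\cong\mathbb{Z}_p$, fix a complementary subgroup $V$ (so $\mathbb{Z}_p^2=U\oplus V$) and an isomorphism $\mathbb{Z}_p\cong V$, and for $j\in\mathbb{Z}_p$ set $\lambda_j=\lambda_j^U=|A\cap(j+U)|$, where $j$ is viewed as an element of $V$. Suppose that one of the following two conditions holds: (1) There exists a subgroup $U\cong\mathbb{Z}_p$ such that, with $J=\{j\in\mathbb{Z}_p:\lambda_j \text{ odd}\}$, there is a set $I\subseteq\mathbb{Z}_p$ with $\lambda_i\geq 1$ for all $i\in I$, $\Sigma(I\cup J)=\mathbb{Z}_p$, and $\sum_{i\in\mathbb{Z}_p}\lfloor\lambda_i^*/2\rfloor\lceil\lambda_i^*/2\rceil\geq p-1$, where $\lambda_i^*=\lambda_i-1$ if $i\in I$ and $\lambda_i^*=\lambda_i$ otherwise. (2) For all subgroups $U\cong\mathbb{Z}_p$ and all choices of isomorphism $\mathbb{Z}_p\cong V$ we have \[ \prod_{j=0}^{p-1}\left|\cos\frac{j\pi}{p}\right|^{\lambda_j}\leq\frac{1}{p^2} \] (here $j$ is identified with its representative in $\{0,\dots,p-1\}$). Then $A$ contains a non-empty subset whose sum is $0$.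
   Context: For a set $S$ in an abelian group, $\Sigma(S)$ denotes the set of all sums of subsets of $S$ (including the empty sum $0$). $\mathrm{Ol}(\mathbb{Z}_p)$ denotes the smallest integer $k$ such that every set of $k$ distinct elements of $\mathbb{Z}_p$ contains a non-empty subset with sum $0$. *)

theory Defs
  imports Complex_Main "HOL-Computational_Algebra.Primes"
begin

text \<open>Z_p is represented by the residues {0..<p} (as integers), Z_p^2 by pairs of residues;
  the group operation is componentwise addition modulo p.\<close>

definition Zp :: "nat \<Rightarrow> int set" where
  "Zp p = {0..<int p}"

definition Zp2 :: "nat \<Rightarrow> (int \<times> int) set" where
  "Zp2 p = Zp p \<times> Zp p"

definition subset_sums :: "nat \<Rightarrow> int set \<Rightarrow> int set" where
  "subset_sums p S = {(\<Sum>B) mod int p | B. B \<subseteq> S}"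

definition Ol :: "nat \<Rightarrow> nat" where
  "Ol p = (LEAST k. \<forall>S. S \<subseteq> Zp p \<and> card S = k \<longrightarrow>
              (\<exists>B. B \<subseteq> S \<and> B \<noteq> {} \<and> (\<Sum>B) mod int p = 0))"

text \<open>A pair (u,v) describes U = <u> (a subgroup isomorphic to Z_p), a complement V = <v>,
  and the isomorphism Z_p -> V, j |-> j v. They form a valid choice iff u, v are
  linearly independent over Z_p.\<close>
definition valid_frame :: "nat \<Rightarrow> int \<times> int \<Rightarrow> int \<times> int \<Rightarrow> bool" where
  "valid_frame p u v \<longleftrightarrow> u \<in> Zp2 p \<and> v \<in> Zp2 p \<and>
     (fst u * snd v - snd u * fst v) mod int p \<noteq> 0"

definition lam :: "nat \<Rightarrow> (int \<times> int) set \<Rightarrow> int \<times> int \<Rightarrow> int \<times> int \<Rightarrow> int \<Rightarrow> nat" where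
  "lam p A u v j = card {a \<in> A. \<exists>t \<in> Zp p.
      a = ((j * fst v + t * fst u) mod int p, (j * snd v + t * snd u) mod int p)}"

end

theory Submission
  imports Defs "HOL-Computational_Algebra.Polynomial" "HOL-Library.FuncSet"
begin

text \<open>Condition (1): in the frame \<open>(u, v)\<close> the set \<open>A\<close> splits into fibres of sizes \<open>\<lambda>\<^sub>j\<close> over
  the cosets \<open>j + U\<close>. Set one point aside in each fibre \<open>i \<in> I\<close>, pick \<open>K \<subseteq> I \<union> J\<close> with the
  right sum, and take about half of the remaining points of each fibre (one more on \<open>K - I\<close>):
  whichever points are taken, the coset coordinate of the total sum vanishes. The sums of the
  coordinates inside the cosets then cover all of \<open>\<int>\<^sub>p\<close> by a block version of the
  Dias da Silva--Hamidoune theorem, proved with the polynomial method of Alon, Nathanson and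
  Ruzsa; the hypothesis \<open>\<Sum> \<lfloor>\<lambda>\<^sub>i\<^sup>*/2\<rfloor>\<lceil>\<lambda>\<^sub>i\<^sup>*/2\<rceil> \<ge> p - 1\<close> is exactly the degree
  condition it needs.

  Condition (2): with \<open>\<omega>(x) = e\<^sup>2\<^sup>\<pi>\<^sup>i\<^sup>x\<^sup>/\<^sup>p\<close>, the number \<open>N\<close> of zero-sum subsets satisfies
  \<open>p\<^sup>2 N = \<Sum>\<^sub>k \<Prod>\<^sub>a\<^sub>\<in>\<^sub>A (1 + \<omega>(k \<cdot> a))\<close>. For \<open>k \<noteq> 0\<close> the level sets of \<open>k\<close> are the cosets of a
  frame, so the \<open>k\<close>-th term has modulus \<open>2\<^sup>|\<^sup>A\<^sup>| \<Prod> |cos(j\<pi>/p)|\<^sup>\<lambda>\<^sup>j \<le> 2\<^sup>|\<^sup>A\<^sup>|/p\<^sup>2\<close>, whence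
  \<open>N \<ge> 2\<^sup>|\<^sup>A\<^sup>|/p\<^sup>4 > 1\<close>.\<close>

section \<open>Lagrange interpolation weights\<close>

definition lagrange_denom :: "real set \<Rightarrow> real \<Rightarrow> real" where
  "lagrange_denom S y = (\<Prod>b\<in>S - {y}. y - b)"

definition lagrange_weight :: "real set \<Rightarrow> real \<Rightarrow> real" where
  "lagrange_weight S y = 1 / lagrange_denom S y"

definition roots_poly :: "('a \<Rightarrow> real) \<Rightarrow> 'a set \<Rightarrow> real poly" where
  "roots_poly d K = (\<Prod>j\<in>K. [:- d j, 1:])"

lemma poly_roots_poly: "poly (roots_poly d K) z = (\<Prod>j\<in>K. z - d j)"
  unfolding roots_poly_def poly_prod by (rule prod.cong) simp_all

lemma degree_roots_poly: "finite K \<Longrightarrow> degree (roots_poly d K) = card K"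
  unfolding roots_poly_def by (subst degree_prod_sum_eq) auto

lemma coeff_card_roots_poly:
  assumes "finite K"
  shows "coeff (roots_poly d K) (card K) = 1"
proof -
  have "coeff (roots_poly d K) (card K) = lead_coeff (roots_poly d K)"
    using degree_roots_poly[OF assms] by simp
  also have "\<dots> = 1" by (simp add: roots_poly_def lead_coeff_prod)
  finally show ?thesis .
qed

lemma lagrange_denom_nonzero: "finite S \<Longrightarrow> lagrange_denom S y \<noteq> 0"
  unfolding lagrange_denom_def by (auto simp: prod_zero_iff)

lemma coeff_eq_sum_lagrange_weight:
  fixes q :: "real poly"
  assumes S: "finite S" "card S = Suc n" and dq: "degree q \<le> n"
  shows "coeff q n = (\<Sum>y\<in>S. poly q y * lagrange_weight S y)"
proof -
  define L where "L = (\<Sum>y\<in>S. smult (poly q y * lagrange_weight S y) (roots_poly id (S - {y})))"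
  have card_rem: "y \<in> S \<Longrightarrow> card (S - {y}) = n" for y using S by simp
  have "degree L \<le> n"
    unfolding L_def
    by (intro degree_sum_le order.trans[OF degree_smult_le])
       (use S card_rem degree_roots_poly[of "S - {_}"] in auto)
  have L_interpolates: "poly L z = poly q z" if z: "z \<in> S" for z
  proof -
    have "poly L z = (\<Sum>y\<in>S. poly q y * lagrange_weight S y * (\<Prod>b\<in>S - {y}. z - b))"
      unfolding L_def by (simp add: poly_sum poly_roots_poly)
    also have "\<dots> = (\<Sum>y\<in>{z}. poly q y * lagrange_weight S y * (\<Prod>b\<in>S - {y}. z - b))"
      by (rule sum.mono_neutral_right) (use S z in \<open>auto simp: prod_zero_iff\<close>)
    also have "\<dots> = poly q z"
      using lagrange_denom_nonzero[OF S(1), of z] by (simp add: lagrange_weight_def lagrange_denom_def)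
    finally show ?thesis .
  qed
  have "q = L"
  proof (rule ccontr)
    assume "q \<noteq> L"
    hence "card {x. poly (q - L) x = 0} \<le> degree (q - L)" by (intro card_poly_roots_bound) simp
    also have "\<dots> \<le> n" using dq \<open>degree L \<le> n\<close> by (meson degree_diff_le)
    finally have "card {x. poly (q - L) x = 0} \<le> n" .
    moreover have "card S \<le> card {x. poly (q - L) x = 0}"
      using L_interpolates \<open>q \<noteq> L\<close> poly_roots_finite[of "q - L"] by (intro card_mono) auto
    ultimately show False using S by simp
  qed
  also have "coeff L n = (\<Sum>y\<in>S. poly q y * lagrange_weight S y)"
    unfolding L_def coeff_sum
  proof (intro sum.cong refl)
    fix y assume "y \<in> S"
    thus "coeff (smult (poly q y * lagrange_weight S y) (roots_poly id (S - {y}))) n =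
          poly q y * lagrange_weight S y"
      using coeff_card_roots_poly[of "S - {y}" id] card_rem S by simp
  qed
  finally show ?thesis .
qed

lemma sum_power_lagrange_weight:
  assumes "finite S" "card S = Suc n" "k \<le> n"
  shows "(\<Sum>y\<in>S. y ^ k * lagrange_weight S y) = (if k = n then 1 else 0)"
  using coeff_eq_sum_lagrange_weight[OF assms(1,2), of "monom 1 k"] assms(3)
  by (simp add: degree_monom_eq poly_monom coeff_monom)

lemma coeff_linear_mult:
  "coeff ([:- a, 1:] * P) k = (if k = 0 then 0 else coeff P (k - 1)) - a * (coeff P k :: real)"
  by (cases k) (simp_all add: coeff_pCons algebra_simps)

lemma subleading_coeffs_roots_poly:
  assumes "finite K"
  shows "(card K = Suc m \<longrightarrow> coeff (roots_poly d K) m = - (\<Sum>j\<in>K. d j)) \<and>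
         (card K = Suc (Suc m) \<longrightarrow>
            coeff (roots_poly d K) m = ((\<Sum>j\<in>K. d j)\<^sup>2 - (\<Sum>j\<in>K. (d j)\<^sup>2)) / 2)"
  using assms
proof (induction K arbitrary: m rule: finite_induct)
  case empty
  then show ?case by simp
next
  case (insert a K)
  have rp: "roots_poly d (insert a K) = [:- d a, 1:] * roots_poly d K"
    using insert.hyps by (simp add: roots_poly_def)
  have top: "coeff (roots_poly d K) (card K) = 1"
    using coeff_card_roots_poly[OF insert.hyps(1)] .
  show ?case
  proof (intro conjI impI)
    assume "card (insert a K) = Suc m"
    hence m: "m = card K" using insert.hyps by simp
    show "coeff (roots_poly d (insert a K)) m = - (\<Sum>j\<in>insert a K. d j)"
    proof (cases m)
      case 0
      thus ?thesis using m insert.hyps by (simp add: roots_poly_def)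
    next
      case (Suc k)
      thus ?thesis using insert m top by (simp add: rp coeff_linear_mult)
    qed
  next
    assume "card (insert a K) = Suc (Suc m)"
    hence cK: "card K = Suc m" using insert.hyps by simp
    show "coeff (roots_poly d (insert a K)) m =
          ((\<Sum>j\<in>insert a K. d j)\<^sup>2 - (\<Sum>j\<in>insert a K. (d j)\<^sup>2)) / 2"
    proof (cases m)
      case 0
      with cK obtain b where "K = {b}" by (auto simp: card_Suc_eq)
      with insert.hyps show ?thesis using 0
        by (simp add: rp coeff_linear_mult roots_poly_def power2_eq_square algebra_simps)
    next
      case (Suc k)
      then show ?thesis using insert cK
        by (simp add: rp coeff_linear_mult power2_eq_square algebra_simps)
    qed
  qed
qed

lemma shifted_roots_poly_diff:
  fixes c :: "'a \<Rightarrow> real"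
  assumes K: "finite K" "card K = Suc m"
  defines "q \<equiv> [:0, 1:] * roots_poly (\<lambda>j. c j + 1) K - [:- real (card K), 1:] * roots_poly c K"
  shows "degree q \<le> m \<and> coeff q m = real (card K) * (real (card K) - 1) / 2 - (\<Sum>j\<in>K. c j)"
proof -
  define n where "n = card K"
  define r where "r = roots_poly (\<lambda>j. c j + 1) K"
  define Q where "Q = roots_poly c K"
  have dr: "degree r = n" and dQ: "degree Q = n"
    unfolding r_def Q_def n_def using degree_roots_poly[OF K(1)] by auto
  have top: "coeff r n = 1" "coeff Q n = 1"
    unfolding r_def Q_def n_def using coeff_card_roots_poly[OF K(1)] by auto
  have sub: "coeff r m = - (\<Sum>j\<in>K. c j + 1)" "coeff Q m = - (\<Sum>j\<in>K. c j)"
    "m = Suc k \<Longrightarrow> coeff r k = ((\<Sum>j\<in>K. c j + 1)\<^sup>2 - (\<Sum>j\<in>K. (c j + 1)\<^sup>2)) / 2"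
    "m = Suc k \<Longrightarrow> coeff Q k = ((\<Sum>j\<in>K. c j)\<^sup>2 - (\<Sum>j\<in>K. (c j)\<^sup>2)) / 2" for k
    unfolding r_def Q_def using subleading_coeffs_roots_poly[OF K(1)] K(2) by auto
  have s1: "(\<Sum>j\<in>K. c j + 1) = (\<Sum>j\<in>K. c j) + real n" by (simp add: sum.distrib n_def)
  have s2: "(\<Sum>j\<in>K. (c j + 1)\<^sup>2) = (\<Sum>j\<in>K. (c j)\<^sup>2) + 2 * (\<Sum>j\<in>K. c j) + real n"
    by (simp add: power2_eq_square algebra_simps sum.distrib sum_distrib_left sum_distrib_right n_def)
  have cq: "coeff q k = (if k = 0 then 0 else coeff r (k - 1) - coeff Q (k - 1)) + real n * coeff Q k" for k
    by (cases k) (simp_all add: q_def r_def Q_def n_def coeff_linear_mult coeff_pCons)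
  have "degree q \<le> m"
  proof (rule degree_le, intro allI impI)
    fix k assume "m < k"
    then consider "k = Suc m" | "Suc m < k" by linarith
    thus "coeff q k = 0"
    proof cases
      case 1 thus ?thesis using top sub K(2) by (simp add: cq s1 n_def)
    next
      case 2 thus ?thesis using dr dQ K(2) top by (cases "k - 1 = n") (auto simp: cq n_def coeff_eq_0)
    qed
  qed
  moreover have "coeff q m = real n * (real n - 1) / 2 - (\<Sum>j\<in>K. c j)"
  proof (cases m)
    case 0
    thus ?thesis using sub K(2) by (simp add: cq n_def)
  next
    case (Suc k)
    thus ?thesis using sub(2) sub(3,4)[of k] K(2) unfolding cq s1 s2 n_def
      by (simp add: power2_eq_square algebra_simps add_divide_distrib diff_divide_distrib)
  qed
  ultimately show ?thesis unfolding n_def by simp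
qed

text \<open>Interpolating the polynomial of \<open>shifted_roots_poly_diff\<close> at the nodes \<open>c\<^sub>i\<close>
  expresses its coefficient of \<open>X\<^sup>|\<^sup>K\<^sup>|\<^sup>-\<^sup>1\<close> as minus the left-hand side.\<close>

lemma sum_shifted_node_ratio:
  fixes c :: "'a \<Rightarrow> real"
  assumes K: "finite K" and inj: "inj_on c K"
  shows "(\<Sum>i\<in>K. c i * (\<Prod>j\<in>K - {i}. c i - c j - 1) / (\<Prod>j\<in>K - {i}. c i - c j))
         = (\<Sum>i\<in>K. c i) - real (card K) * (real (card K) - 1) / 2"
proof (cases "card K")
  case 0
  hence "K = {}" using K by simp
  thus ?thesis by simp
next
  case (Suc m)
  define q where "q = [:0, 1:] * roots_poly (\<lambda>j. c j + 1) K - [:- real (card K), 1:] * roots_poly c K"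
  have q: "degree q \<le> m" "coeff q m = real (card K) * (real (card K) - 1) / 2 - (\<Sum>j\<in>K. c j)"
    using shifted_roots_poly_diff[OF K Suc, of c] unfolding q_def by auto
  have nodes: "finite (c ` K)" "card (c ` K) = Suc m" using K inj Suc by (auto simp: card_image)
  have "coeff q m = (\<Sum>y\<in>c ` K. poly q y * lagrange_weight (c ` K) y)"
    by (rule coeff_eq_sum_lagrange_weight[OF nodes q(1)])
  also have "\<dots> = (\<Sum>i\<in>K. - (c i * (\<Prod>j\<in>K - {i}. c i - c j - 1) / (\<Prod>j\<in>K - {i}. c i - c j)))"
    unfolding sum.reindex[OF inj, unfolded comp_def]
  proof (rule sum.cong)
    fix i assume i: "i \<in> K"
    have "(\<Prod>j\<in>K. c i - (c j + 1)) = - (\<Prod>j\<in>K - {i}. c i - c j - 1)"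
      using i K by (subst prod.remove[of K i]) (auto simp: algebra_simps)
    moreover have "(\<Prod>j\<in>K. c i - c j) = 0" using i K by (auto simp: prod_zero_iff)
    ultimately have "poly q (c i) = - (c i * (\<Prod>j\<in>K - {i}. c i - c j - 1))"
      unfolding q_def by (simp add: poly_roots_poly)
    moreover have "c ` K - {c i} = c ` (K - {i})" using inj i by (auto simp: inj_on_def)
    hence "lagrange_weight (c ` K) (c i) = 1 / (\<Prod>j\<in>K - {i}. c i - c j)"
      unfolding lagrange_weight_def lagrange_denom_def
      using inj by (simp add: prod.reindex inj_on_diff)
    ultimately show "poly q (c i) * lagrange_weight (c ` K) (c i) =
        - (c i * (\<Prod>j\<in>K - {i}. c i - c j - 1) / (\<Prod>j\<in>K - {i}. c i - c j))"
      by simp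
  qed simp
  finally show ?thesis using q(2) by (simp add: sum_negf)
qed

section \<open>Polynomial functions in finitely many real variables\<close>

definition monomial :: "nat \<Rightarrow> (nat \<Rightarrow> nat) \<Rightarrow> (nat \<Rightarrow> real) \<Rightarrow> real" where
  "monomial n e x = (\<Prod>i<n. x i ^ e i)"

definition total_degree :: "nat \<Rightarrow> (nat \<Rightarrow> nat) \<Rightarrow> nat" where
  "total_degree n e = (\<Sum>i<n. e i)"

definition poly_fun :: "nat \<Rightarrow> nat \<Rightarrow> ((nat \<Rightarrow> real) \<Rightarrow> real) \<Rightarrow> bool" where
  "poly_fun n d g \<longleftrightarrow> (\<exists>E cf. finite E \<and> (\<forall>e\<in>E. total_degree n e \<le> d) \<and>
                               (\<forall>x. g x = (\<Sum>e\<in>E. cf e * monomial n e x)))"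

lemma monomial_add: "monomial n (\<lambda>i. e i + f i) x = monomial n e x * monomial n f x"
  unfolding monomial_def by (simp add: power_add prod.distrib)

lemma total_degree_add: "total_degree n (\<lambda>i. e i + f i) = total_degree n e + total_degree n f"
  unfolding total_degree_def by (simp add: sum.distrib)

lemma monomial_incr:
  "i < n \<Longrightarrow> x i * monomial n e x = monomial n (e(i := Suc (e i))) x"
  unfolding monomial_def by (simp add: prod.remove[of "{..<n}" i] mult_ac)

lemma total_degree_incr: "i < n \<Longrightarrow> total_degree n (e(i := Suc (e i))) = Suc (total_degree n e)"
  unfolding total_degree_def by (simp add: sum.remove[of "{..<n}" i])

lemma total_degree_decr:
  "i < n \<Longrightarrow> 1 \<le> c i \<Longrightarrow> Suc (total_degree n (c(i := c i - 1))) = total_degree n c"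
  unfolding total_degree_def by (simp add: sum.remove[of "{..<n}" i])

lemma poly_fun_const: "poly_fun n d (\<lambda>x. a)"
  unfolding poly_fun_def
  by (rule exI[of _ "{\<lambda>_. 0}"], rule exI[of _ "\<lambda>_. a"]) (simp add: monomial_def total_degree_def)

lemma poly_fun_var: "i < n \<Longrightarrow> 1 \<le> d \<Longrightarrow> poly_fun n d (\<lambda>x. x i)"
  unfolding poly_fun_def
  by (rule exI[of _ "{(\<lambda>_. 0)(i := 1)}"], rule exI[of _ "\<lambda>_. 1"])
     (simp add: monomial_def total_degree_def prod.remove[of "{..<n}" i] sum.remove[of "{..<n}" i])

lemma poly_fun_add:
  assumes "poly_fun n d g" "poly_fun n d h"
  shows "poly_fun n d (\<lambda>x. g x + h x)"
proof -
  obtain E1 c1 E2 c2 where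
    E1: "finite E1" "\<forall>e\<in>E1. total_degree n e \<le> d" "\<And>x. g x = (\<Sum>e\<in>E1. c1 e * monomial n e x)" and
    E2: "finite E2" "\<forall>e\<in>E2. total_degree n e \<le> d" "\<And>x. h x = (\<Sum>e\<in>E2. c2 e * monomial n e x)"
    using assms unfolding poly_fun_def by blast
  define cf where "cf e = (if e \<in> E1 then c1 e else 0) + (if e \<in> E2 then c2 e else 0)" for e
  have "g x + h x = (\<Sum>e\<in>E1 \<union> E2. cf e * monomial n e x)" for x
  proof -
    have "(\<Sum>e\<in>E1 \<union> E2. (if e \<in> E1 then c1 e else 0) * monomial n e x) = g x"
      unfolding E1(3) by (rule sum.mono_neutral_cong_right) (use E1 E2 in auto)
    moreover have "(\<Sum>e\<in>E1 \<union> E2. (if e \<in> E2 then c2 e else 0) * monomial n e x) = h x"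
      unfolding E2(3) by (rule sum.mono_neutral_cong_right) (use E1 E2 in auto)
    ultimately show ?thesis unfolding cf_def by (simp add: distrib_right sum.distrib)
  qed
  thus ?thesis unfolding poly_fun_def using E1 E2 by (intro exI[of _ "E1 \<union> E2"] exI[of _ cf]) auto
qed

lemma poly_fun_mult:
  assumes "poly_fun n d1 g" "poly_fun n d2 h" "d1 + d2 \<le> d"
  shows "poly_fun n d (\<lambda>x. g x * h x)"
proof -
  obtain E1 c1 E2 c2 where
    E1: "finite E1" "\<forall>e\<in>E1. total_degree n e \<le> d1" "\<And>x. g x = (\<Sum>e\<in>E1. c1 e * monomial n e x)" and
    E2: "finite E2" "\<forall>e\<in>E2. total_degree n e \<le> d2" "\<And>x. h x = (\<Sum>e\<in>E2. c2 e * monomial n e x)"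
    using assms unfolding poly_fun_def by blast
  define plus where "plus = (\<lambda>(e::nat \<Rightarrow> nat, f::nat \<Rightarrow> nat). (\<lambda>i. e i + f i))"
  define E where "E = plus ` (E1 \<times> E2)"
  define cf where "cf e = (\<Sum>q\<in>{q \<in> E1 \<times> E2. plus q = e}. c1 (fst q) * c2 (snd q))" for e
  have expansion: "g x * h x = (\<Sum>e\<in>E. cf e * monomial n e x)" for x
  proof -
    have "g x * h x = (\<Sum>q\<in>E1 \<times> E2. c1 (fst q) * c2 (snd q) * monomial n (plus q) x)"
      unfolding E1(3) E2(3) sum_product sum.cartesian_product plus_def
      by (rule sum.cong) (auto simp: monomial_add)
    also have "\<dots> = (\<Sum>e\<in>E. \<Sum>q\<in>{q \<in> E1 \<times> E2. plus q = e}. c1 (fst q) * c2 (snd q) * monomial n (plus q) x)"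
      unfolding E_def by (rule sum.group[symmetric]) (use E1 E2 in auto)
    also have "\<dots> = (\<Sum>e\<in>E. cf e * monomial n e x)"
      unfolding cf_def sum_distrib_right by (rule sum.cong) auto
    finally show ?thesis .
  qed
  moreover have "total_degree n e \<le> d" if e: "e \<in> E" for e
  proof -
    obtain e1 e2 where "e1 \<in> E1" "e2 \<in> E2" "e = (\<lambda>i. e1 i + e2 i)"
      using e unfolding E_def plus_def by auto
    thus ?thesis using E1(2) E2(2) assms(3) by (fastforce simp: total_degree_add)
  qed
  moreover have "finite E" unfolding E_def using E1 E2 by simp
  ultimately show ?thesis unfolding poly_fun_def by (intro exI[of _ E] exI[of _ cf]) auto
qed

lemma poly_fun_sum:
  "finite I \<Longrightarrow> (\<And>i. i \<in> I \<Longrightarrow> poly_fun n d (f i)) \<Longrightarrow> poly_fun n d (\<lambda>x. \<Sum>i\<in>I. f i x)"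
proof (induction I rule: finite_induct)
  case empty
  then show ?case using poly_fun_const[of n d 0] by simp
next
  case (insert a I)
  then show ?case using poly_fun_add[of n d "f a" "\<lambda>x. \<Sum>i\<in>I. f i x"] by simp
qed

lemma poly_fun_prod:
  "finite I \<Longrightarrow> (\<And>i. i \<in> I \<Longrightarrow> poly_fun n 1 (f i)) \<Longrightarrow> poly_fun n (card I) (\<lambda>x. \<Prod>i\<in>I. f i x)"
proof (induction I rule: finite_induct)
  case empty
  then show ?case using poly_fun_const[of n 0 1] by simp
next
  case (insert a I)
  then show ?case
    using poly_fun_mult[of n 1 "f a" "card I" "\<lambda>x. \<Prod>i\<in>I. f i x" "card (insert a I)"] by simp
qed

lemma poly_fun_power: "poly_fun n d g \<Longrightarrow> poly_fun n (d * m) (\<lambda>x. g x ^ m)"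
proof (induction m)
  case 0
  then show ?case using poly_fun_const[of n 0 1] by simp
next
  case (Suc m)
  then show ?case using poly_fun_mult[of n d g "d * m" "\<lambda>x. g x ^ m" "d * Suc m"] by simp
qed

lemma poly_fun_diff:
  assumes "poly_fun n d g" "poly_fun n d h"
  shows "poly_fun n d (\<lambda>x. g x - h x)"
  using poly_fun_add[OF assms(1) poly_fun_mult[OF poly_fun_const[of n 0 "- 1"] assms(2), of d]]
  by simp

lemma poly_fun_sum_vars: "poly_fun n 1 (\<lambda>x. \<Sum>i<n. x i)"
  by (rule poly_fun_sum) (auto intro: poly_fun_var)

section \<open>The coefficient functional of a grid\<close>

text \<open>For a grid \<open>A\<^sub>0 \<times> \<dots> \<times> A\<^sub>n\<^sub>-\<^sub>1\<close> with \<open>|A\<^sub>i| = c\<^sub>i + 1\<close>,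
  \<open>grid_coeff\<close> returns the coefficient of \<open>x\<^sup>c\<close> of every polynomial of total degree at most
  \<open>\<Sum> c\<^sub>i\<close> (the coefficient form of the Combinatorial Nullstellensatz).\<close>

definition is_grid :: "nat \<Rightarrow> (nat \<Rightarrow> real set) \<Rightarrow> (nat \<Rightarrow> nat) \<Rightarrow> bool" where
  "is_grid n A c \<longleftrightarrow> (\<forall>i<n. finite (A i) \<and> card (A i) = Suc (c i))"

definition grid_coeff :: "nat \<Rightarrow> (nat \<Rightarrow> real set) \<Rightarrow> ((nat \<Rightarrow> real) \<Rightarrow> real) \<Rightarrow> real" where
  "grid_coeff n A g = (\<Sum>a\<in>PiE {..<n} A. g a * (\<Prod>i<n. lagrange_weight (A i) (a i)))"

lemma grid_coeff_add: "grid_coeff n A (\<lambda>x. g x + h x) = grid_coeff n A g + grid_coeff n A h"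
  unfolding grid_coeff_def by (simp add: distrib_right sum.distrib)

lemma grid_coeff_cmult: "grid_coeff n A (\<lambda>x. a * g x) = a * grid_coeff n A g"
  unfolding grid_coeff_def by (simp add: sum_distrib_left mult.assoc)

lemma grid_coeff_sum:
  "grid_coeff n A (\<lambda>x. \<Sum>j\<in>J. a j * monomial n (e j) x) = (\<Sum>j\<in>J. a j * grid_coeff n A (monomial n (e j)))"
  unfolding grid_coeff_def sum_distrib_right sum_distrib_left
  by (subst sum.swap) (simp add: mult.assoc)

lemma grid_coeff_monomial:
  assumes g: "is_grid n A c" and d: "total_degree n e \<le> total_degree n c"
  shows "grid_coeff n A (monomial n e) = (if \<forall>i<n. e i = c i then 1 else 0)"
proof -
  have fin: "\<forall>i<n. finite (A i)" using g by (simp add: is_grid_def)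
  have factors: "grid_coeff n A (monomial n e) = (\<Prod>i<n. \<Sum>y\<in>A i. y ^ e i * lagrange_weight (A i) y)"
    unfolding grid_coeff_def monomial_def
    by (subst prod_sum_PiE) (use fin in \<open>auto simp: prod.distrib\<close>)
  have factor: "(\<Sum>y\<in>A i. y ^ e i * lagrange_weight (A i) y) = (if e i = c i then 1 else 0)"
    if "i < n" "e i \<le> c i" for i
    using g that sum_power_lagrange_weight[of "A i" "c i" "e i"] by (simp add: is_grid_def)
  show ?thesis
  proof (cases "\<exists>i<n. e i < c i")
    case True
    then obtain i where i: "i < n" "e i < c i" by blast
    thus ?thesis unfolding factors using factor[of i] by (auto intro!: prod_zero)
  next
    case False
    hence ge: "\<forall>i<n. c i \<le> e i" by (meson leI)
    with d have eq: "\<forall>i<n. e i = c i"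
      unfolding total_degree_def using sum_mono_inv[of c "{..<n}" e] by (metis finite_lessThan lessThan_iff sum_mono order.antisym)
    have "(\<Prod>i<n. \<Sum>y\<in>A i. y ^ e i * lagrange_weight (A i) y) = 1"
      using eq factor by (intro prod.neutral) auto
    thus ?thesis unfolding factors using eq by simp
  qed
qed

lemma grid_coeff_expansion:
  assumes g: "is_grid n A c" and E: "\<forall>e\<in>E. total_degree n e \<le> total_degree n c"
  shows "grid_coeff n A (\<lambda>x. \<Sum>e\<in>E. cf e * monomial n e x) = (\<Sum>e\<in>E. if \<forall>i<n. e i = c i then cf e else 0)"
  unfolding grid_coeff_sum[where e = "\<lambda>e. e"] using E by (intro sum.cong) (auto simp: grid_coeff_monomial[OF g])

lemma grid_coeff_grid_indep:
  assumes "is_grid n A c" "is_grid n B c" "poly_fun n (total_degree n c) g"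
  shows "grid_coeff n A g = grid_coeff n B g"
proof -
  obtain E cf where "\<forall>e\<in>E. total_degree n e \<le> total_degree n c" "g = (\<lambda>x. \<Sum>e\<in>E. cf e * monomial n e x)"
    using assms(3) unfolding poly_fun_def by blast
  thus ?thesis using grid_coeff_expansion[OF assms(1)] grid_coeff_expansion[OF assms(2)] by simp
qed

lemma grid_coeff_low_degree:
  assumes g: "is_grid n A c" and "poly_fun n d f" "d < total_degree n c"
  shows "grid_coeff n A f = 0"
proof -
  obtain E cf where E: "\<forall>e\<in>E. total_degree n e \<le> d" "f = (\<lambda>x. \<Sum>e\<in>E. cf e * monomial n e x)"
    using assms(2) unfolding poly_fun_def by blast
  have "\<not> (\<forall>i<n. e i = c i)" if "e \<in> E" for e
  proof
    assume "\<forall>i<n. e i = c i"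
    hence "total_degree n e = total_degree n c" unfolding total_degree_def by (intro sum.cong) auto
    with E(1) that assms(3) show False by fastforce
  qed
  moreover have "\<forall>e\<in>E. total_degree n e \<le> total_degree n c" using E(1) assms(3) by fastforce
  ultimately show ?thesis unfolding E(2) by (subst grid_coeff_expansion[OF g]) (auto intro!: sum.neutral simp del: not_all)
qed

lemma grid_coeff_sum_vars_mult:
  assumes g: "is_grid n A c" and B: "\<And>i. i < n \<Longrightarrow> 1 \<le> c i \<Longrightarrow> is_grid n (B i) (c(i := c i - 1))"
    and f: "poly_fun n d f" and d: "Suc d = total_degree n c"
  shows "grid_coeff n A (\<lambda>x. (\<Sum>i<n. x i) * f x) = (\<Sum>i\<in>{i. i < n \<and> 1 \<le> c i}. grid_coeff n (B i) f)"
proof -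
  obtain E cf where E: "finite E" "\<forall>e\<in>E. total_degree n e \<le> d" "f = (\<lambda>x. \<Sum>e\<in>E. cf e * monomial n e x)"
    using f unfolding poly_fun_def by blast
  define incr where "incr q = (fst q)(snd q := Suc (fst q (snd q)))" for q :: "(nat \<Rightarrow> nat) \<times> nat"
  have "(\<Sum>i<n. x i) * f x = (\<Sum>q\<in>E \<times> {..<n}. cf (fst q) * monomial n (incr q) x)" for x
  proof -
    have "(\<Sum>i<n. x i) * f x = (\<Sum>e\<in>E. \<Sum>i<n. cf e * (x i * monomial n e x))"
      unfolding E(3) sum_product by (subst sum.swap) (simp add: algebra_simps)
    also have "\<dots> = (\<Sum>q\<in>E \<times> {..<n}. cf (fst q) * monomial n (incr q) x)"
      by (simp add: monomial_incr sum.cartesian_product split_def incr_def)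
    finally show ?thesis .
  qed
  hence "grid_coeff n A (\<lambda>x. (\<Sum>i<n. x i) * f x) =
         (\<Sum>q\<in>E \<times> {..<n}. cf (fst q) * grid_coeff n A (monomial n (incr q)))"
    by (simp add: grid_coeff_sum)
  also have "\<dots> = (\<Sum>q\<in>E \<times> {..<n}. if 1 \<le> c (snd q) \<and> (\<forall>j<n. fst q j = (c(snd q := c (snd q) - 1)) j)
                                     then cf (fst q) else 0)"
  proof (rule sum.cong)
    fix q assume "q \<in> E \<times> {..<n}"
    then obtain e i where q: "q = (e, i)" "e \<in> E" "i < n" by auto
    have deg: "total_degree n (incr q) \<le> total_degree n c"
      using total_degree_incr[OF q(3)] E(2) q(2) d by (fastforce simp: q(1) incr_def)
    have iff: "(\<forall>j<n. incr q j = c j) \<longleftrightarrow> 1 \<le> c i \<and> (\<forall>j<n. e j = (c(i := c i - 1)) j)"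
      using q(3) unfolding q(1) incr_def by (auto simp: fun_upd_def)
    show "cf (fst q) * grid_coeff n A (monomial n (incr q)) =
        (if 1 \<le> c (snd q) \<and> (\<forall>j<n. fst q j = (c(snd q := c (snd q) - 1)) j) then cf (fst q) else 0)"
      using grid_coeff_monomial[OF g deg] iff q(1) by auto
  qed simp
  also have "\<dots> = (\<Sum>i<n. \<Sum>e\<in>E. if 1 \<le> c i \<and> (\<forall>j<n. e j = (c(i := c i - 1)) j) then cf e else 0)"
    by (subst sum.swap) (simp add: sum.cartesian_product split_def)
  also have "\<dots> = (\<Sum>i\<in>{i. i < n \<and> 1 \<le> c i}. \<Sum>e\<in>E. if \<forall>j<n. e j = (c(i := c i - 1)) j then cf e else 0)"
    by (rule sum.mono_neutral_cong_right) auto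
  also have "\<dots> = (\<Sum>i\<in>{i. i < n \<and> 1 \<le> c i}. grid_coeff n (B i) f)"
  proof (rule sum.cong)
    fix i assume "i \<in> {i. i < n \<and> 1 \<le> c i}"
    hence i: "i < n" "1 \<le> c i" by auto
    have "\<forall>e\<in>E. total_degree n e \<le> total_degree n (c(i := c i - 1))"
      using E(2) total_degree_decr[of i n c] i d by force
    thus "(\<Sum>e\<in>E. if \<forall>j<n. e j = (c(i := c i - 1)) j then cf e else 0) = grid_coeff n (B i) f"
      unfolding E(3) by (simp add: grid_coeff_expansion[OF B[OF i]])
  qed simp
  finally show ?thesis .
qed

section \<open>The block Vandermonde polynomial\<close>

definition block_pairs :: "nat \<Rightarrow> (nat \<Rightarrow> nat) \<Rightarrow> (nat \<times> nat) set" where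
  "block_pairs n blk = {(i, j). i < j \<and> j < n \<and> blk i = blk j}"

definition block_vandermonde :: "nat \<Rightarrow> (nat \<Rightarrow> nat) \<Rightarrow> (nat \<Rightarrow> real) \<Rightarrow> real" where
  "block_vandermonde n blk x = (\<Prod>q\<in>block_pairs n blk. x (snd q) - x (fst q))"

definition block_of :: "nat \<Rightarrow> (nat \<Rightarrow> nat) \<Rightarrow> nat \<Rightarrow> nat set" where
  "block_of n blk i = {j. j < n \<and> blk j = blk i}"

lemma finite_block_pairs: "finite (block_pairs n blk)"
  by (rule finite_subset[of _ "{..<n} \<times> {..<n}"]) (auto simp: block_pairs_def)

lemma finite_block_of: "finite (block_of n blk i)"
  by (rule finite_subset[of _ "{..<n}"]) (auto simp: block_of_def)

lemma block_vandermonde_eq_0_iff: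
  "block_vandermonde n blk x = 0 \<longleftrightarrow> (\<exists>i<n. \<exists>j<n. i \<noteq> j \<and> blk i = blk j \<and> x i = x j)"
proof
  assume "block_vandermonde n blk x = 0"
  then obtain q where "q \<in> block_pairs n blk" "x (snd q) = x (fst q)"
    unfolding block_vandermonde_def using finite_block_pairs by (auto simp: prod_zero_iff)
  thus "\<exists>i<n. \<exists>j<n. i \<noteq> j \<and> blk i = blk j \<and> x i = x j"
    by (auto simp: block_pairs_def) (metis less_imp_neq less_trans)
next
  assume "\<exists>i<n. \<exists>j<n. i \<noteq> j \<and> blk i = blk j \<and> x i = x j"
  then obtain i j where ij: "i < j" "j < n" "blk i = blk j" "x i = x j"
    by (metis linorder_neqE_nat)
  hence "(i, j) \<in> block_pairs n blk" by (auto simp: block_pairs_def)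
  thus "block_vandermonde n blk x = 0"
    unfolding block_vandermonde_def using finite_block_pairs ij(4) by (force simp: prod_zero_iff)
qed

lemma block_vandermonde_Ints:
  "(\<And>i. i < n \<Longrightarrow> x i \<in> \<int>) \<Longrightarrow> block_vandermonde n blk x \<in> \<int>"
  unfolding block_vandermonde_def by (rule Ints_prod) (auto simp: block_pairs_def)

lemma poly_fun_block_vandermonde: "poly_fun n (card (block_pairs n blk)) (block_vandermonde n blk)"
  unfolding block_vandermonde_def
proof (rule poly_fun_prod[OF finite_block_pairs])
  fix q assume "q \<in> block_pairs n blk"
  hence "snd q < n" "fst q < n" by (auto simp: block_pairs_def)
  thus "poly_fun n 1 (\<lambda>x. x (snd q) - x (fst q))" by (intro poly_fun_diff poly_fun_var) auto
qed

lemma block_vandermonde_decr: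
  assumes i: "i < n"
  shows "block_vandermonde n blk (x(i := x i - 1)) * (\<Prod>j\<in>block_of n blk i - {i}. x i - x j) =
         block_vandermonde n blk x * (\<Prod>j\<in>block_of n blk i - {i}. x i - x j - 1)"
proof -
  define P where "P = block_pairs n blk"
  define Pi where "Pi = {q\<in>P. fst q = i \<or> snd q = i}"
  define K where "K = block_of n blk i - {i}"
  define y where "y = x(i := x i - 1)"
  have fin: "finite Pi" "finite (P - Pi)"
    using finite_block_pairs[of n blk] unfolding P_def Pi_def by auto
  have split: "(\<Prod>q\<in>P. f q) = (\<Prod>q\<in>P - Pi. f q) * (\<Prod>q\<in>Pi. f q)" for f :: "nat \<times> nat \<Rightarrow> real"
    by (subst prod.union_disjoint[symmetric]) (use fin in \<open>auto intro: prod.cong simp: Pi_def\<close>)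
  have reindex: "(\<Prod>q\<in>Pi. f q) = (\<Prod>j\<in>K. f (min i j, max i j))" for f :: "nat \<times> nat \<Rightarrow> real"
    by (rule prod.reindex_bij_witness[of _ "\<lambda>j. (min i j, max i j)" "\<lambda>q. if fst q = i then snd q else fst q"])
       (use i in \<open>auto simp: Pi_def K_def P_def block_pairs_def block_of_def min_def max_def\<close>)
  have outside: "(\<Prod>q\<in>P - Pi. y (snd q) - y (fst q)) = (\<Prod>q\<in>P - Pi. x (snd q) - x (fst q))"
    by (rule prod.cong) (auto simp: Pi_def y_def)
  have inside: "(y (max i j) - y (min i j)) * (x i - x j) = (x (max i j) - x (min i j)) * (x i - x j - 1)"
    if "j \<in> K" for j
    using that by (cases "i < j") (auto simp: K_def y_def min_def max_def algebra_simps)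
  have "block_vandermonde n blk y * (\<Prod>j\<in>K. x i - x j) =
        (\<Prod>q\<in>P - Pi. x (snd q) - x (fst q)) * (\<Prod>j\<in>K. (y (max i j) - y (min i j)) * (x i - x j))"
    unfolding block_vandermonde_def P_def[symmetric] split[of "\<lambda>q. y (snd q) - y (fst q)"] outside reindex
    by (simp add: prod.distrib)
  also have "\<dots> = (\<Prod>q\<in>P - Pi. x (snd q) - x (fst q)) * (\<Prod>j\<in>K. (x (max i j) - x (min i j)) * (x i - x j - 1))"
    using inside by simp
  also have "\<dots> = block_vandermonde n blk x * (\<Prod>j\<in>K. x i - x j - 1)"
    unfolding block_vandermonde_def P_def[symmetric] split[of "\<lambda>q. x (snd q) - x (fst q)"] reindex
    by (simp add: prod.distrib)
  finally show ?thesis unfolding K_def y_def .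
qed

lemma card_less_pairs:
  assumes "finite (K :: nat set)"
  shows "2 * card {(i, j). i \<in> K \<and> j \<in> K \<and> i < j} + card K = card K * card K"
proof -
  define U where "U = {(i, j). i \<in> K \<and> j \<in> K \<and> i < j}"
  define L where "L = {(i, j). i \<in> K \<and> j \<in> K \<and> j < i}"
  define D where "D = {(i, j). i \<in> K \<and> j \<in> K \<and> i = j}"
  have KK: "K \<times> K = U \<union> L \<union> D" unfolding U_def L_def D_def by auto
  have fin: "finite U" "finite L" "finite D" unfolding U_def L_def D_def
    by (auto intro: finite_subset[of _ "K \<times> K"] simp: assms)
  have "card U = card L"
    by (rule bij_betw_same_card[of "\<lambda>(i, j). (j, i)"]) (auto simp: bij_betw_def inj_on_def U_def L_def image_def)
  moreover have "card D = card K"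
    by (rule bij_betw_same_card[of "\<lambda>(i, j). i"]) (auto simp: bij_betw_def inj_on_def D_def image_def)
  moreover have "card (K \<times> K) = card U + card L + card D"
    unfolding KK using fin by (subst card_Un_disjoint, auto simp: U_def L_def D_def card_Un_disjoint)+
  ultimately show ?thesis by (simp add: U_def card_cartesian_product)
qed

lemma card_block_pairs:
  "real (card (block_pairs n blk)) =
   (\<Sum>b\<in>blk ` {..<n}. real (card {i. i < n \<and> blk i = b}) * (real (card {i. i < n \<and> blk i = b}) - 1) / 2)"
proof -
  have "card (block_pairs n blk) = (\<Sum>q\<in>block_pairs n blk. 1)" by simp
  also have "\<dots> = (\<Sum>b\<in>blk ` {..<n}. \<Sum>q\<in>{q \<in> block_pairs n blk. blk (fst q) = b}. 1)"
    by (rule sum.group[symmetric]) (use finite_block_pairs[of n blk] in \<open>auto simp: block_pairs_def\<close>)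
  also have "\<dots> = (\<Sum>b\<in>blk ` {..<n}. card {q \<in> block_pairs n blk. blk (fst q) = b})" by simp
  also have "\<dots> = (\<Sum>b\<in>blk ` {..<n}. card {(i, j). i \<in> {i. i < n \<and> blk i = b} \<and> j \<in> {i. i < n \<and> blk i = b} \<and> i < j})"
    by (intro sum.cong refl arg_cong[where f = card]) (auto simp: block_pairs_def)
  finally have "real (card (block_pairs n blk)) =
      (\<Sum>b\<in>blk ` {..<n}. real (card {(i, j). i \<in> {i. i < n \<and> blk i = b} \<and> j \<in> {i. i < n \<and> blk i = b} \<and> i < j}))"
    by simp
  also have "\<dots> = (\<Sum>b\<in>blk ` {..<n}. real (card {i. i < n \<and> blk i = b}) * (real (card {i. i < n \<and> blk i = b}) - 1) / 2)"
  proof (rule sum.cong)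
    fix b
    have "finite {i. i < n \<and> blk i = b}" by simp
    from arg_cong[OF card_less_pairs[OF this], of real]
    show "real (card {(i, j). i \<in> {i. i < n \<and> blk i = b} \<and> j \<in> {i. i < n \<and> blk i = b} \<and> i < j}) =
          real (card {i. i < n \<and> blk i = b}) * (real (card {i. i < n \<and> blk i = b}) - 1) / 2"
      by (simp add: field_simps)
  qed simp
  finally show ?thesis .
qed

lemma card_block_pairs_sum_block_of:
  "real (card (block_pairs n blk)) = (\<Sum>k<n. (real (card (block_of n blk k)) - 1) / 2)"
proof -
  have "(\<Sum>k<n. (real (card (block_of n blk k)) - 1) / 2) =
        (\<Sum>b\<in>blk ` {..<n}. \<Sum>k\<in>{k \<in> {..<n}. blk k = b}. (real (card (block_of n blk k)) - 1) / 2)"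
    by (rule sum.group[symmetric]) auto
  also have "\<dots> = (\<Sum>b\<in>blk ` {..<n}. real (card {i. i < n \<and> blk i = b}) * (real (card {i. i < n \<and> blk i = b}) - 1) / 2)"
  proof (rule sum.cong)
    fix b
    have "(\<Sum>k\<in>{k \<in> {..<n}. blk k = b}. (real (card (block_of n blk k)) - 1) / 2) =
          (\<Sum>k\<in>{k \<in> {..<n}. blk k = b}. (real (card {i. i < n \<and> blk i = b}) - 1) / 2)"
      by (rule sum.cong) (auto simp: block_of_def)
    thus "(\<Sum>k\<in>{k \<in> {..<n}. blk k = b}. (real (card (block_of n blk k)) - 1) / 2) =
       real (card {i. i < n \<and> blk i = b}) * (real (card {i. i < n \<and> blk i = b}) - 1) / 2"
      by simp
  qed simp
  finally show ?thesis using card_block_pairs[of n blk] by simp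
qed

lemma sum_decr_block_vandermonde_inj:
  assumes inj: "\<And>i j. i < n \<Longrightarrow> j < n \<Longrightarrow> blk i = blk j \<Longrightarrow> x i = x j \<Longrightarrow> i = j"
  shows "(\<Sum>i<n. x i * block_vandermonde n blk (x(i := x i - 1))) =
         ((\<Sum>i<n. x i) - real (card (block_pairs n blk))) * block_vandermonde n blk x"
proof -
  define num where "num i = (\<Prod>j\<in>block_of n blk i - {i}. x i - x j - 1)" for i
  define den where "den i = (\<Prod>j\<in>block_of n blk i - {i}. x i - x j)" for i
  have "den i \<noteq> 0" if "i < n" for i
    unfolding den_def using inj finite_block_of that by (auto simp: prod_zero_iff block_of_def)
  hence decr: "block_vandermonde n blk (x(i := x i - 1)) = block_vandermonde n blk x * num i / den i"
    if "i < n" for i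
    using block_vandermonde_decr[OF that, of blk x] that unfolding num_def den_def by (simp add: field_simps)
  have "(\<Sum>i<n. x i * block_vandermonde n blk (x(i := x i - 1))) =
        block_vandermonde n blk x * (\<Sum>i<n. x i * num i / den i)"
    by (simp add: decr sum_distrib_left algebra_simps)
  also have "(\<Sum>i<n. x i * num i / den i) =
        (\<Sum>b\<in>blk ` {..<n}. \<Sum>i\<in>{i \<in> {..<n}. blk i = b}. x i * num i / den i)"
    by (rule sum.group[symmetric]) auto
  also have "\<dots> = (\<Sum>b\<in>blk ` {..<n}. (\<Sum>i\<in>{i \<in> {..<n}. blk i = b}. x i) -
        real (card {i. i < n \<and> blk i = b}) * (real (card {i. i < n \<and> blk i = b}) - 1) / 2)"
  proof (rule sum.cong)
    fix b
    define F where "F = {i \<in> {..<n}. blk i = b}"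
    have "block_of n blk i = F" if "i \<in> F" for i using that unfolding F_def block_of_def by auto
    hence "(\<Sum>i\<in>F. x i * num i / den i) = (\<Sum>i\<in>F. x i * (\<Prod>j\<in>F - {i}. x i - x j - 1) / (\<Prod>j\<in>F - {i}. x i - x j))"
      by (intro sum.cong) (auto simp: num_def den_def)
    also have "\<dots> = (\<Sum>i\<in>F. x i) - real (card F) * (real (card F) - 1) / 2"
      by (rule sum_shifted_node_ratio) (use inj in \<open>auto simp: F_def inj_on_def\<close>)
    finally show "(\<Sum>i\<in>{i \<in> {..<n}. blk i = b}. x i * num i / den i) = (\<Sum>i\<in>{i \<in> {..<n}. blk i = b}. x i) -
        real (card {i. i < n \<and> blk i = b}) * (real (card {i. i < n \<and> blk i = b}) - 1) / 2"
      unfolding F_def by simp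
  qed simp
  also have "\<dots> = (\<Sum>i<n. x i) - real (card (block_pairs n blk))"
    unfolding sum_subtractf card_block_pairs by (subst sum.group) auto
  finally show ?thesis by (metis mult.commute)
qed

text \<open>Both sides are continuous in \<open>x\<close>; on \<open>x + \<epsilon> (0, 1, 2, \<dots>)\<close> the coordinates inside
  each block are distinct for all but finitely many \<open>\<epsilon>\<close>, so the identity extends to \<open>\<epsilon> = 0\<close>.\<close>

lemma sum_decr_block_vandermonde:
  "(\<Sum>i<n. x i * block_vandermonde n blk (x(i := x i - 1))) =
   ((\<Sum>i<n. x i) - real (card (block_pairs n blk))) * block_vandermonde n blk x"
proof -
  define xe where "xe e = (\<lambda>j. x j + e * real j)" for e
  define bad where "bad = (\<lambda>q. (x (fst q) - x (snd q)) / (real (snd q) - real (fst q))) ` block_pairs n blk"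
  define F where "F e = (\<Sum>i<n. xe e i * block_vandermonde n blk ((xe e)(i := xe e i - 1)))" for e
  define G where "G e = ((\<Sum>i<n. xe e i) - real (card (block_pairs n blk))) * block_vandermonde n blk (xe e)" for e
  have FG: "F e = G e" if e: "e \<notin> bad" for e
    unfolding F_def G_def
  proof (rule sum_decr_block_vandermonde_inj)
    fix i j assume ij: "i < n" "j < n" "blk i = blk j" "xe e i = xe e j"
    show "i = j"
    proof (rule ccontr)
      assume "i \<noteq> j"
      then consider "i < j" | "j < i" by linarith
      thus False
      proof cases
        case 1
        hence "(i, j) \<in> block_pairs n blk" "e = (x i - x j) / (real j - real i)"
          using ij by (auto simp: block_pairs_def xe_def field_simps)
        thus False using e unfolding bad_def by force
      next
        case 2
        hence "(j, i) \<in> block_pairs n blk" "e = (x j - x i) / (real i - real j)"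
          using ij by (auto simp: block_pairs_def xe_def field_simps)
        thus False using e unfolding bad_def by force
      qed
    qed
  qed
  have "finite bad" unfolding bad_def by (simp add: finite_block_pairs)
  hence "eventually (\<lambda>e. \<forall>b\<in>bad. e \<noteq> b) (at (0::real))"
    by (intro eventually_ball_finite) (auto intro: eventually_neq_at_within)
  hence ev: "eventually (\<lambda>e. F e = G e) (at (0::real))"
    by (rule eventually_mono) (use FG in blast)
  have shift: "(xe e)(i := xe e i - 1) = (\<lambda>j. (x(i := x i - 1)) j + e * real j)" for e i
    by (auto simp: xe_def)
  have "isCont F 0" "isCont G 0"
    unfolding F_def G_def shift unfolding xe_def block_vandermonde_def by (intro continuous_intros)+
  hence "F 0 = G 0"
    using ev unfolding isCont_def by (metis LIM_unique tendsto_cong)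
  moreover have "xe 0 = x" by (simp add: xe_def)
  ultimately show ?thesis unfolding F_def G_def by simp
qed

lemma card_block_pairs_le_sum:
  fixes k :: "nat \<Rightarrow> nat"
  assumes inj: "\<And>i j. i < n \<Longrightarrow> j < n \<Longrightarrow> blk i = blk j \<Longrightarrow> k i = k j \<Longrightarrow> i = j"
  shows "card (block_pairs n blk) \<le> (\<Sum>j<n. k j)"
proof -
  define below where "below j = {i. i < n \<and> blk i = blk j \<and> k i < k j}" for j
  define orient where "orient q = (if k (fst q) < k (snd q) then (snd q, fst q) else q)" for q :: "nat \<times> nat"
  have k_ne: "k i \<noteq> k j" if "(i, j) \<in> block_pairs n blk" for i j
    using that inj[of i j] by (auto simp: block_pairs_def)
  have "card (block_pairs n blk) \<le> card (SIGMA j:{..<n}. below j)"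
  proof (rule card_inj_on_le)
    show "inj_on orient (block_pairs n blk)"
    proof (rule inj_onI)
      fix q q' assume q: "q \<in> block_pairs n blk" "q' \<in> block_pairs n blk" "orient q = orient q'"
      have "fst q < snd q" "fst q' < snd q'" using q(1,2) by (auto simp: block_pairs_def)
      thus "q = q'"
        using q(3) unfolding orient_def by (cases q, cases q') (auto split: if_splits)
    qed
    show "orient ` block_pairs n blk \<subseteq> (SIGMA j:{..<n}. below j)"
    proof
      fix q assume "q \<in> orient ` block_pairs n blk"
      then obtain i j where ij: "(i, j) \<in> block_pairs n blk" "q = orient (i, j)" by auto
      with k_ne[OF ij(1)] show "q \<in> (SIGMA j:{..<n}. below j)"
        by (auto simp: orient_def below_def block_pairs_def)
    qed
    show "finite (SIGMA j:{..<n}. below j)" unfolding below_def by simp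
  qed
  also have "\<dots> = (\<Sum>j<n. card (below j))" by (simp add: card_SigmaI below_def)
  also have "\<dots> \<le> (\<Sum>j<n. k j)"
  proof (rule sum_mono)
    fix j assume "j \<in> {..<n}"
    have "card (below j) \<le> card {..<k j}"
      by (rule card_inj_on_le[of k]) (use inj in \<open>auto simp: below_def inj_on_def\<close>)
    thus "card (below j) \<le> k j" by simp
  qed
  finally show ?thesis .
qed

definition range_grid :: "(nat \<Rightarrow> nat) \<Rightarrow> nat \<Rightarrow> real set" where
  "range_grid c i = real ` {0..c i}"

lemma is_grid_range_grid: "is_grid n (range_grid c) c"
  unfolding is_grid_def range_grid_def by (simp add: card_image inj_on_def)

lemma lagrange_weight_range_grid: "lagrange_weight (range_grid c i) (real (c i)) = 1 / fact (c i)"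
proof -
  have "range_grid c i - {real (c i)} = real ` {0..<c i}" unfolding range_grid_def by auto
  hence "lagrange_denom (range_grid c i) (real (c i)) = (\<Prod>b\<in>{0..<c i}. real (c i) - real b)"
    unfolding lagrange_denom_def by (simp add: prod.reindex inj_on_def)
  also have "\<dots> = (\<Prod>b\<in>{1..c i}. real b)"
    by (rule prod.reindex_bij_witness[of _ "\<lambda>b. c i - b" "\<lambda>b. c i - b"]) auto
  finally show ?thesis unfolding lagrange_weight_def by (simp add: fact_prod)
qed

text \<open>On \<open>range_grid c\<close>, a point where the block Vandermonde polynomial of degree
  \<open>\<Sum> c\<^sub>i\<close> does not vanish has coordinates of total at least that degree, so it is the
  corner \<open>c\<close> itself.\<close>

lemma grid_coeff_range_grid_block_vandermonde:
  assumes d: "total_degree n c = card (block_pairs n blk)"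
  shows "grid_coeff n (range_grid c) (block_vandermonde n blk) =
         block_vandermonde n blk (\<lambda>i. real (c i)) / (\<Prod>i<n. fact (c i))"
proof -
  define corner where "corner = restrict (\<lambda>i. real (c i)) {..<n}"
  have corner: "corner \<in> PiE {..<n} (range_grid c)" unfolding corner_def range_grid_def by auto
  have zero: "block_vandermonde n blk a = 0" if a: "a \<in> PiE {..<n} (range_grid c)" "a \<noteq> corner" for a
  proof (rule ccontr)
    assume nz: "block_vandermonde n blk a \<noteq> 0"
    have "\<forall>i<n. \<exists>k. k \<le> c i \<and> a i = real k"
      using a(1) unfolding range_grid_def by (force simp: PiE_def Pi_def)
    then obtain k where k: "\<And>i. i < n \<Longrightarrow> k i \<le> c i \<and> a i = real (k i)" by metis
    have "card (block_pairs n blk) \<le> (\<Sum>i<n. k i)"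
      by (rule card_block_pairs_le_sum) (use nz k in \<open>force simp: block_vandermonde_eq_0_iff\<close>)
    moreover have "(\<Sum>i<n. k i) \<le> (\<Sum>i<n. c i)" using k by (intro sum_mono) auto
    ultimately have "(\<Sum>i<n. k i) = (\<Sum>i<n. c i)" using d by (simp add: total_degree_def)
    hence "\<forall>i<n. k i = c i" using k sum_mono_inv[of k "{..<n}" c] by (metis lessThan_iff finite_lessThan)
    hence "a = corner" using a(1) k unfolding corner_def by (auto simp: PiE_def extensional_def)
    with a(2) show False by simp
  qed
  have "grid_coeff n (range_grid c) (block_vandermonde n blk) =
        block_vandermonde n blk corner * (\<Prod>i<n. lagrange_weight (range_grid c i) (corner i))"
    unfolding grid_coeff_def
    by (subst sum.remove[OF _ corner]) (auto intro!: sum.neutral simp: zero finite_PiE range_grid_def)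
  also have "block_vandermonde n blk corner = block_vandermonde n blk (\<lambda>i. real (c i))"
    unfolding block_vandermonde_def corner_def by (rule prod.cong) (auto simp: block_pairs_def)
  finally show ?thesis
    by (simp add: corner_def lagrange_weight_range_grid prod_dividef)
qed

lemma prod_fact_decr:
  fixes i n :: nat
  assumes "i < n" "1 \<le> c i"
  shows "(\<Prod>j<n. fact ((c(i := c i - 1)) j)) * real (c i) = (\<Prod>j<n. fact (c j) :: real)"
proof -
  have remove: "(\<Prod>j<n. fact (d j) :: real) = fact (d i) * (\<Prod>j\<in>{..<n} - {i}. fact (d j))" for d
    by (rule prod.remove) (use assms(1) in auto)
  have "(\<Prod>j\<in>{..<n} - {i}. fact ((c(i := c i - 1)) j)) = (\<Prod>j\<in>{..<n} - {i}. fact (c j) :: real)"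
    by (rule prod.cong) auto
  moreover have "fact (c i) = (fact (c i - 1) :: real) * real (c i)"
    using assms(2) by (cases "c i") auto
  ultimately show ?thesis by (simp only: remove[of c] remove[of "c(i := c i - 1)"]) simp
qed

text \<open>The closed form \<open>m! V(c) / \<Prod> c\<^sub>i!\<close> of the coefficient below satisfies the
  recurrence produced by \<open>grid_coeff_sum_vars_mult\<close>.\<close>

lemma block_vandermonde_fact_recurrence:
  assumes d: "total_degree n c = card (block_pairs n blk) + Suc m"
  shows "(\<Sum>i\<in>{i. i < n \<and> 1 \<le> c i}. fact m * block_vandermonde n blk (\<lambda>j. real ((c(i := c i - 1)) j)) /
            (\<Prod>j<n. fact ((c(i := c i - 1)) j))) =
         fact (Suc m) * block_vandermonde n blk (\<lambda>i. real (c i)) / (\<Prod>i<n. fact (c i))"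
proof -
  define x where "x = (\<lambda>i. real (c i))"
  define F where "F = (\<Prod>j<n. fact (c j) :: real)"
  have summand: "fact m * block_vandermonde n blk (\<lambda>j. real ((c(i := c i - 1)) j)) / (\<Prod>j<n. fact ((c(i := c i - 1)) j)) =
       fact m / F * (x i * block_vandermonde n blk (x(i := x i - 1)))"
    if i: "i < n" "1 \<le> c i" for i
  proof -
    have "(\<lambda>j. real ((c(i := c i - 1)) j)) = x(i := x i - 1)"
      using i by (auto simp: x_def of_nat_diff)
    moreover have "(\<Prod>j<n. fact ((c(i := c i - 1)) j)) = F / x i"
      using prod_fact_decr[of i n c] i unfolding F_def x_def by (simp add: field_simps)
    ultimately show ?thesis using i unfolding x_def by simp
  qed
  have "(\<Sum>i\<in>{i. i < n \<and> 1 \<le> c i}. fact m * block_vandermonde n blk (\<lambda>j. real ((c(i := c i - 1)) j)) /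
            (\<Prod>j<n. fact ((c(i := c i - 1)) j))) =
        (\<Sum>i<n. fact m / F * (x i * block_vandermonde n blk (x(i := x i - 1))))"
  proof (rule sum.mono_neutral_cong_left)
    show "\<forall>i\<in>{..<n} - {i. i < n \<and> 1 \<le> c i}. fact m / F * (x i * block_vandermonde n blk (x(i := x i - 1))) = 0"
      by (auto simp: x_def)
    show "fact m * block_vandermonde n blk (\<lambda>j. real ((c(i := c i - 1)) j)) / (\<Prod>j<n. fact ((c(i := c i - 1)) j)) =
          fact m / F * (x i * block_vandermonde n blk (x(i := x i - 1)))" if "i \<in> {i. i < n \<and> 1 \<le> c i}" for i
      using summand that by simp
  qed auto
  also have "\<dots> = fact m / F * (((\<Sum>i<n. x i) - real (card (block_pairs n blk))) * block_vandermonde n blk x)"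
    unfolding sum_distrib_left[symmetric] sum_decr_block_vandermonde ..
  also have "(\<Sum>i<n. x i) - real (card (block_pairs n blk)) = real (Suc m)"
    using d unfolding x_def total_degree_def by (simp flip: of_nat_sum)
  finally show ?thesis by (simp add: x_def F_def field_simps)
qed

theorem grid_coeff_block_vandermonde_power:
  "total_degree n c = card (block_pairs n blk) + m \<Longrightarrow>
   grid_coeff n (range_grid c) (\<lambda>x. block_vandermonde n blk x * (\<Sum>i<n. x i) ^ m) =
   fact m * block_vandermonde n blk (\<lambda>i. real (c i)) / (\<Prod>i<n. fact (c i))"
proof (induction m arbitrary: c)
  case 0
  then show ?case using grid_coeff_range_grid_block_vandermonde[of n c blk] by simp
next
  case (Suc m)
  have f: "poly_fun n (card (block_pairs n blk) + m) (\<lambda>x. block_vandermonde n blk x * (\<Sum>i<n. x i) ^ m)"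
    by (rule poly_fun_mult[OF poly_fun_block_vandermonde poly_fun_power[OF poly_fun_sum_vars]]) simp
  have "grid_coeff n (range_grid c) (\<lambda>x. block_vandermonde n blk x * (\<Sum>i<n. x i) ^ Suc m) =
        grid_coeff n (range_grid c) (\<lambda>x. (\<Sum>i<n. x i) * (block_vandermonde n blk x * (\<Sum>i<n. x i) ^ m))"
    by (simp add: algebra_simps)
  also have "\<dots> = (\<Sum>i\<in>{i. i < n \<and> 1 \<le> c i}.
                    grid_coeff n (range_grid (c(i := c i - 1))) (\<lambda>x. block_vandermonde n blk x * (\<Sum>i<n. x i) ^ m))"
    by (rule grid_coeff_sum_vars_mult[OF is_grid_range_grid _ f]) (use Suc.prems in \<open>auto simp: is_grid_range_grid\<close>)
  also have "\<dots> = (\<Sum>i\<in>{i. i < n \<and> 1 \<le> c i}. fact m * block_vandermonde n blk (\<lambda>j. real ((c(i := c i - 1)) j)) /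
                    (\<Prod>j<n. fact ((c(i := c i - 1)) j)))"
    using Suc.IH Suc.prems total_degree_decr by (intro sum.cong refl) force
  also have "\<dots> = fact (Suc m) * block_vandermonde n blk (\<lambda>i. real (c i)) / (\<Prod>i<n. fact (c i))"
    by (rule block_vandermonde_fact_recurrence[OF Suc.prems])
  finally show ?case .
qed

section \<open>Restricted sums with distinct summands in each block\<close>

text \<open>The lower-order terms of the product have degree below that of the grid and contribute
  nothing to the coefficient.\<close>

lemma grid_coeff_prod_shift:
  assumes grid: "is_grid n A c" and "finite C" "poly_fun n d g" "d + card C \<le> total_degree n c"
  shows "grid_coeff n A (\<lambda>x. g x * (\<Prod>t\<in>C. (\<Sum>i<n. x i) - t)) =
         grid_coeff n A (\<lambda>x. g x * (\<Sum>i<n. x i) ^ card C)"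
  using assms(2-)
proof (induction C arbitrary: g d rule: finite_induct)
  case empty
  then show ?case by simp
next
  case (insert a C)
  have card: "card (insert a C) = Suc (card C)" using insert by simp
  have gS: "poly_fun n (d + 1) (\<lambda>x. g x * (\<Sum>i<n. x i))"
    using insert.prems by (intro poly_fun_mult[OF _ poly_fun_sum_vars]) auto
  have "grid_coeff n A (\<lambda>x. g x * (\<Prod>t\<in>insert a C. (\<Sum>i<n. x i) - t)) =
        grid_coeff n A (\<lambda>x. (g x * (\<Sum>i<n. x i)) * (\<Prod>t\<in>C. (\<Sum>i<n. x i) - t) +
                            (- a) * (g x * (\<Prod>t\<in>C. (\<Sum>i<n. x i) - t)))"
    using insert by (simp add: algebra_simps)
  also have "\<dots> = grid_coeff n A (\<lambda>x. (g x * (\<Sum>i<n. x i)) * (\<Sum>i<n. x i) ^ card C) +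
                  (- a) * grid_coeff n A (\<lambda>x. g x * (\<Sum>i<n. x i) ^ card C)"
    unfolding grid_coeff_add grid_coeff_cmult
    using insert.IH[OF gS] insert.IH[of d g] insert.prems card by simp
  also have "grid_coeff n A (\<lambda>x. g x * (\<Sum>i<n. x i) ^ card C) = 0"
    by (rule grid_coeff_low_degree[OF grid poly_fun_mult[OF _ poly_fun_power[OF poly_fun_sum_vars]]])
       (use insert.prems card in auto)
  finally show ?case using card by (simp add: algebra_simps)
qed

lemma grid_coeff_block_vandermonde_prod:
  assumes grid: "is_grid n A c" and C: "finite C" "card C = m"
    and d: "total_degree n c = card (block_pairs n blk) + m"
  shows "grid_coeff n A (\<lambda>x. block_vandermonde n blk x * (\<Prod>t\<in>C. (\<Sum>i<n. x i) - t)) =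
         fact m * block_vandermonde n blk (\<lambda>i. real (c i)) / (\<Prod>i<n. fact (c i))"
proof -
  have f: "poly_fun n (total_degree n c) (\<lambda>x. block_vandermonde n blk x * (\<Sum>i<n. x i) ^ m)"
    using d by (intro poly_fun_mult[OF poly_fun_block_vandermonde poly_fun_power[OF poly_fun_sum_vars]]) auto
  have "grid_coeff n A (\<lambda>x. block_vandermonde n blk x * (\<Prod>t\<in>C. (\<Sum>i<n. x i) - t)) =
        grid_coeff n A (\<lambda>x. block_vandermonde n blk x * (\<Sum>i<n. x i) ^ m)"
    using grid_coeff_prod_shift[OF grid C(1) poly_fun_block_vandermonde] d C(2) by simp
  also have "\<dots> = grid_coeff n (range_grid c) (\<lambda>x. block_vandermonde n blk x * (\<Sum>i<n. x i) ^ m)"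
    by (rule grid_coeff_grid_indep[OF grid is_grid_range_grid f])
  also have "\<dots> = fact m * block_vandermonde n blk (\<lambda>i. real (c i)) / (\<Prod>i<n. fact (c i))"
    by (rule grid_coeff_block_vandermonde_power[OF d])
  finally show ?thesis .
qed

definition int_multiple :: "int \<Rightarrow> real \<Rightarrow> bool" where
  "int_multiple p x \<longleftrightarrow> (\<exists>k. x = of_int (p * k))"

lemma int_multiple_mult: "int_multiple p x \<Longrightarrow> y \<in> \<int> \<Longrightarrow> int_multiple p (x * y)"
  unfolding int_multiple_def by (elim exE Ints_cases) (auto intro: exI[of _ "_ * _"] simp: algebra_simps)

lemma int_multiple_sum: "(\<And>a. a \<in> S \<Longrightarrow> int_multiple p (f a)) \<Longrightarrow> int_multiple p (\<Sum>a\<in>S. f a)"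
proof (induction S rule: infinite_finite_induct)
  case (insert x F)
  then obtain k1 k2 where "f x = of_int (p * k1)" "(\<Sum>a\<in>F. f a) = of_int (p * k2)"
    unfolding int_multiple_def by blast
  thus ?case using insert unfolding int_multiple_def by (intro exI[of _ "k1 + k2"]) (simp add: algebra_simps)
qed (auto simp: int_multiple_def intro: exI[of _ 0])

definition grid_denominator :: "nat \<Rightarrow> (nat \<Rightarrow> int set) \<Rightarrow> int" where
  "grid_denominator n A = (\<Prod>i<n. \<Prod>y\<in>A i. \<Prod>b\<in>A i - {y}. y - b)"

lemma lagrange_denom_of_int:
  assumes "finite A" "y \<in> A"
  shows "lagrange_denom (real_of_int ` A) (real_of_int y) = real_of_int (\<Prod>b\<in>A - {y}. y - b)"
proof -
  have "real_of_int ` A - {real_of_int y} = real_of_int ` (A - {y})" by auto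
  thus ?thesis unfolding lagrange_denom_def by (simp add: prod.reindex inj_on_def)
qed

text \<open>The factor \<open>grid_denominator\<close> clears the Lagrange denominators of an integer grid.\<close>

lemma grid_coeff_int_multiple:
  fixes A :: "nat \<Rightarrow> int set"
  assumes fin: "\<And>i. i < n \<Longrightarrow> finite (A i)"
    and g: "\<And>a. a \<in> PiE {..<n} (\<lambda>i. real_of_int ` A i) \<Longrightarrow> int_multiple p (g a)"
  shows "int_multiple p (of_int (grid_denominator n A) * grid_coeff n (\<lambda>i. real_of_int ` A i) g)"
proof -
  define Ar where "Ar i = real_of_int ` A i" for i
  define W where "W = (\<Prod>i<n. \<Prod>y\<in>Ar i. lagrange_denom (Ar i) y)"
  have "W = (\<Prod>i<n. \<Prod>y\<in>A i. lagrange_denom (Ar i) (real_of_int y))"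
    unfolding W_def Ar_def by (rule prod.cong) (auto simp: prod.reindex inj_on_def)
  also have "\<dots> = of_int (grid_denominator n A)"
    unfolding grid_denominator_def Ar_def of_int_prod
    by (intro prod.cong refl) (use fin lagrange_denom_of_int in auto)
  finally have W: "W = of_int (grid_denominator n A)" .
  have "W * (\<Prod>i<n. lagrange_weight (Ar i) (a i)) \<in> \<int>" if a: "a \<in> PiE {..<n} Ar" for a
  proof -
    have "W * (\<Prod>i<n. lagrange_weight (Ar i) (a i)) = (\<Prod>i<n. \<Prod>y\<in>Ar i - {a i}. lagrange_denom (Ar i) y)"
      unfolding W_def prod.distrib[symmetric]
    proof (rule prod.cong)
      fix i assume "i \<in> {..<n}"
      hence i: "finite (Ar i)" "a i \<in> Ar i" using a fin by (auto simp: Ar_def)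
      show "(\<Prod>y\<in>Ar i. lagrange_denom (Ar i) y) * lagrange_weight (Ar i) (a i) =
            (\<Prod>y\<in>Ar i - {a i}. lagrange_denom (Ar i) y)"
        using lagrange_denom_nonzero[OF i(1), of "a i"] i
        by (simp add: prod.remove[OF i] lagrange_weight_def)
    qed simp
    also have "\<dots> \<in> \<int>"
      using fin by (intro Ints_prod) (auto simp: Ar_def lagrange_denom_of_int simp del: of_int_prod)
    finally show ?thesis .
  qed
  hence "int_multiple p (W * grid_coeff n Ar g)"
    unfolding grid_coeff_def sum_distrib_left mult.left_commute[of W]
    using g by (intro int_multiple_sum int_multiple_mult) (auto simp: Ar_def[abs_def])
  thus ?thesis unfolding W Ar_def .
qed

definition restricted_sums :: "nat \<Rightarrow> nat \<Rightarrow> (nat \<Rightarrow> nat) \<Rightarrow> (nat \<Rightarrow> int set) \<Rightarrow> int set" where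
  "restricted_sums p n blk A = {(\<Sum>i<n. a i) mod int p | a. a \<in> PiE {..<n} A \<and>
                                  (\<forall>i<n. \<forall>j<n. i \<noteq> j \<longrightarrow> blk i = blk j \<longrightarrow> a i \<noteq> a j)}"

lemma restricted_sums_subset: "0 < p \<Longrightarrow> restricted_sums p n blk A \<subseteq> {0..<int p}"
  unfolding restricted_sums_def by auto

lemma int_multiple_vanishing_on_grid:
  fixes A :: "nat \<Rightarrow> int set" and C :: "int set"
  assumes C: "finite C" "restricted_sums p n blk A \<subseteq> C"
    and a: "a \<in> PiE {..<n} (\<lambda>i. real_of_int ` A i)"
  shows "int_multiple (int p) (block_vandermonde n blk a * (\<Prod>t\<in>real_of_int ` C. (\<Sum>i<n. a i) - t))"
proof -
  have "\<forall>i<n. \<exists>z. z \<in> A i \<and> a i = real_of_int z" using a by (force simp: PiE_def Pi_def)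
  then obtain a' where a': "\<And>i. i < n \<Longrightarrow> a' i \<in> A i \<and> a i = real_of_int (a' i)" by metis
  show ?thesis
  proof (cases "block_vandermonde n blk a = 0")
    case True
    thus ?thesis unfolding int_multiple_def by (intro exI[of _ 0]) simp
  next
    case False
    define s where "s = (\<Sum>i<n. a' i)"
    have "s mod int p \<in> restricted_sums p n blk A"
      unfolding restricted_sums_def s_def
      using False a' by (intro CollectI exI[of _ "restrict a' {..<n}"]) (auto simp: block_vandermonde_eq_0_iff)
    hence t: "real_of_int (s mod int p) \<in> real_of_int ` C" using C by auto
    have sum_a: "(\<Sum>i<n. a i) = real_of_int s" unfolding s_def using a' by simp
    define rest where "rest = (\<Prod>t\<in>real_of_int ` C - {real_of_int (s mod int p)}. (\<Sum>i<n. a i) - t)"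
    have "(\<Prod>t\<in>real_of_int ` C. (\<Sum>i<n. a i) - t) = real_of_int (int p * (s div int p)) * rest"
      unfolding rest_def using t C(1) by (simp add: prod.remove sum_a minus_mod_eq_mult_div[symmetric])
    moreover have "block_vandermonde n blk a * rest \<in> \<int>"
      unfolding rest_def sum_a using a' by (intro Ints_mult block_vandermonde_Ints Ints_prod) auto
    moreover have "int_multiple (int p) (real_of_int (int p * (s div int p)))"
      unfolding int_multiple_def by blast
    ultimately show ?thesis
      using int_multiple_mult by (metis mult.left_commute)
  qed
qed

lemma not_dvd_grid_denominator:
  assumes "prime p" and "\<And>i. i < n \<Longrightarrow> A i \<subseteq> {0..<int p}"
  shows "\<not> int p dvd grid_denominator n A"
proof
  assume "int p dvd grid_denominator n A"
  moreover have "finite (A i)" if "i < n" for i using assms(2)[OF that] finite_subset by blast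
  ultimately obtain i y b where iyb: "i < n" "y \<in> A i" "b \<in> A i - {y}" "int p dvd (y - b)"
    unfolding grid_denominator_def using assms(1) by (auto simp: prime_dvd_prod_iff)
  have "y \<in> {0..<int p}" "b \<in> {0..<int p}" using iyb assms(2)[of i] by auto
  moreover have "\<bar>int p\<bar> \<le> \<bar>y - b\<bar>" using iyb by (intro dvd_imp_le_int) auto
  ultimately show False by auto
qed

lemma not_dvd_block_vandermonde:
  assumes "prime p" and cp: "\<And>i. i < n \<Longrightarrow> c i < p"
    and cdist: "\<And>i j. i < n \<Longrightarrow> j < n \<Longrightarrow> i \<noteq> j \<Longrightarrow> blk i = blk j \<Longrightarrow> c i \<noteq> c j"
  shows "\<not> int p dvd (\<Prod>q\<in>block_pairs n blk. int (c (snd q)) - int (c (fst q)))"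
proof
  assume "int p dvd (\<Prod>q\<in>block_pairs n blk. int (c (snd q)) - int (c (fst q)))"
  then obtain q where q: "q \<in> block_pairs n blk" "int p dvd (int (c (snd q)) - int (c (fst q)))"
    using assms(1) finite_block_pairs by (auto simp: prime_dvd_prod_iff)
  hence "c (snd q) \<noteq> c (fst q)" "c (fst q) < p" "c (snd q) < p"
    using cdist cp by (auto simp: block_pairs_def)
  moreover from this have "\<bar>int p\<bar> \<le> \<bar>int (c (snd q)) - int (c (fst q))\<bar>"
    using q(2) by (intro dvd_imp_le_int) auto
  ultimately show False by simp
qed

lemma not_int_multiple_corner_coeff:
  fixes A :: "nat \<Rightarrow> int set" and c :: "nat \<Rightarrow> nat"
  assumes p: "prime p" and A: "\<And>i. i < n \<Longrightarrow> A i \<subseteq> {0..<int p}"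
    and cp: "\<And>i. i < n \<Longrightarrow> c i < p"
    and cdist: "\<And>i j. i < n \<Longrightarrow> j < n \<Longrightarrow> i \<noteq> j \<Longrightarrow> blk i = blk j \<Longrightarrow> c i \<noteq> c j"
    and mp: "m < p"
  shows "\<not> int_multiple (int p) (of_int (grid_denominator n A) *
           (fact m * block_vandermonde n blk (\<lambda>i. real (c i)) / (\<Prod>i<n. fact (c i))))"
proof
  define V where "V = (\<Prod>q\<in>block_pairs n blk. int (c (snd q)) - int (c (fst q)))"
  define F where "F = (\<Prod>i<n. fact (c i) :: int)"
  assume "int_multiple (int p) (of_int (grid_denominator n A) *
           (fact m * block_vandermonde n blk (\<lambda>i. real (c i)) / (\<Prod>i<n. fact (c i))))"
  then obtain K where "of_int (grid_denominator n A) * (fact m * of_int V / of_int F) = real_of_int (int p * K)"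
    unfolding int_multiple_def V_def F_def block_vandermonde_def by auto
  hence "real_of_int (grid_denominator n A * (fact m * V)) = real_of_int (int p * K * F)"
    unfolding F_def by (simp add: field_simps)
  hence "grid_denominator n A * (fact m * V) = int p * K * F"
    by (simp only: of_int_eq_iff)
  hence "int p dvd grid_denominator n A * (fact m * V)"
    by (metis dvd_triv_left mult.assoc)
  moreover have "\<not> int p dvd fact m"
  proof
    assume "int p dvd fact m"
    hence "int p dvd int (fact m)" by (simp add: of_nat_fact)
    hence "p dvd fact m" by (simp only: of_nat_dvd_iff)
    thus False using p mp by (simp add: prime_dvd_fact_iff)
  qed
  moreover have "\<not> int p dvd grid_denominator n A"
    by (rule not_dvd_grid_denominator[of p n A]) (use p A in auto)
  moreover have "\<not> int p dvd V"
    unfolding V_def by (rule not_dvd_block_vandermonde[of p n c blk]) (use p cp cdist in auto)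
  moreover have "prime (int p)" using p by (simp add: prime_nat_int_transfer)
  ultimately show False by (simp add: prime_dvd_mult_iff)
qed

text \<open>A block version of the Dias da Silva--Hamidoune theorem in the form of Alon, Nathanson and
  Ruzsa. If there were at most \<open>m\<close> restricted sums, a set \<open>C\<close> of \<open>m\<close> residues containing them
  makes \<open>block_vandermonde \<cdot> \<Prod>\<^sub>t\<^sub>\<in>\<^sub>C (\<Sum> x\<^sub>i - t)\<close> vanish mod \<open>p\<close> on the grid, whereas its
  grid coefficient \<open>m! V(c) / \<Prod> c\<^sub>i!\<close> is a \<open>p\<close>-adic unit.\<close>

theorem card_restricted_sums_gt:
  fixes A :: "nat \<Rightarrow> int set" and c :: "nat \<Rightarrow> nat"
  assumes p: "prime p"
    and A: "\<And>i. i < n \<Longrightarrow> A i \<subseteq> {0..<int p}" "\<And>i. i < n \<Longrightarrow> card (A i) = Suc (c i)"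
    and cdist: "\<And>i j. i < n \<Longrightarrow> j < n \<Longrightarrow> i \<noteq> j \<Longrightarrow> blk i = blk j \<Longrightarrow> c i \<noteq> c j"
    and d: "total_degree n c = card (block_pairs n blk) + m"
    and mp: "m < p"
  shows "m < card (restricted_sums p n blk A)"
proof (rule ccontr)
  assume "\<not> m < card (restricted_sums p n blk A)"
  moreover have "restricted_sums p n blk A \<subseteq> {0..<int p}"
    using restricted_sums_subset p prime_gt_0_nat by blast
  ultimately obtain C where C: "restricted_sums p n blk A \<subseteq> C" "C \<subseteq> {0..<int p}" "card C = m"
    using exists_subset_between[of "restricted_sums p n blk A" m "{0..<int p}"] mp by auto
  hence fin_C: "finite C" using finite_subset by blast
  have fin_A: "finite (A i)" if "i < n" for i using A(2)[OF that] card.infinite by force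
  have cp: "c i < p" if "i < n" for i
    using card_mono[OF _ A(1)[OF that]] A(2)[OF that] by simp
  define f where "f x = block_vandermonde n blk x * (\<Prod>t\<in>real_of_int ` C. (\<Sum>i<n. x i) - t)" for x
  have grid: "is_grid n (\<lambda>i. real_of_int ` A i) c"
    unfolding is_grid_def using fin_A A(2) by (auto simp: card_image inj_on_def)
  have "int_multiple (int p) (of_int (grid_denominator n A) * grid_coeff n (\<lambda>i. real_of_int ` A i) f)"
    unfolding f_def using fin_A fin_C C(1)
    by (intro grid_coeff_int_multiple int_multiple_vanishing_on_grid) auto
  moreover have "grid_coeff n (\<lambda>i. real_of_int ` A i) f =
                 fact m * block_vandermonde n blk (\<lambda>i. real (c i)) / (\<Prod>i<n. fact (c i))"
    unfolding f_def using fin_C C(3) by (intro grid_coeff_block_vandermonde_prod[OF grid _ _ d]) (auto simp: card_image inj_on_def)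
  ultimately show False using not_int_multiple_corner_coeff[OF p A(1) cp cdist mp] by simp
qed

section \<open>Coordinates of \<open>\<int>\<^sub>p\<^sup>2\<close> along a frame\<close>

definition frame_point :: "nat \<Rightarrow> int \<times> int \<Rightarrow> int \<times> int \<Rightarrow> int \<Rightarrow> int \<Rightarrow> int \<times> int" where
  "frame_point p u v j t = ((j * fst v + t * fst u) mod int p, (j * snd v + t * snd u) mod int p)"

definition fibre :: "nat \<Rightarrow> (int \<times> int) set \<Rightarrow> int \<times> int \<Rightarrow> int \<times> int \<Rightarrow> int \<Rightarrow> int set" where
  "fibre p A u v j = {t \<in> Zp p. frame_point p u v j t \<in> A}"

lemma finite_Zp: "finite (Zp p)"
  unfolding Zp_def by simp

lemma mod_in_Zp: "0 < p \<Longrightarrow> x mod int p \<in> Zp p"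
  unfolding Zp_def by simp

lemma Zp_eq_if_dvd_diff:
  assumes "x \<in> Zp p" "y \<in> Zp p" "int p dvd (x - y)"
  shows "x = y"
proof (rule ccontr)
  assume "x \<noteq> y"
  hence "\<bar>int p\<bar> \<le> \<bar>x - y\<bar>" using assms(3) by (intro dvd_imp_le_int) auto
  thus False using assms(1,2) by (auto simp: Zp_def)
qed

lemma lam_frame_point: "lam p A u v j = card {a \<in> A. \<exists>t \<in> Zp p. a = frame_point p u v j t}"
  unfolding lam_def frame_point_def by simp

lemma frame_point_inj:
  assumes p: "prime p" and frame: "valid_frame p u v"
    and jt: "j \<in> Zp p" "j' \<in> Zp p" "t \<in> Zp p" "t' \<in> Zp p"
    and eq: "frame_point p u v j t = frame_point p u v j' t'"
  shows "j = j' \<and> t = t'"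
proof -
  obtain u1 u2 v1 v2 where uv: "u = (u1, u2)" "v = (v1, v2)" by (cases u, cases v) auto
  define x where "x = j - j'"
  define y where "y = t - t'"
  define D where "D = u1 * v2 - u2 * v1"
  have ip: "prime (int p)" using p by (simp add: prime_nat_int_transfer)
  have D: "\<not> int p dvd D" using frame unfolding valid_frame_def D_def uv by (simp add: dvd_eq_mod_eq_0)
  have "(j * v1 + t * u1) mod int p = (j' * v1 + t' * u1) mod int p"
       "(j * v2 + t * u2) mod int p = (j' * v2 + t' * u2) mod int p"
    using eq unfolding frame_point_def uv by simp_all
  hence e1: "int p dvd x * v1 + y * u1" and e2: "int p dvd x * v2 + y * u2"
    unfolding mod_eq_dvd_iff x_def y_def by (simp_all add: algebra_simps)
  have "int p dvd u1 * (x * v2 + y * u2) - u2 * (x * v1 + y * u1)"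
    and "int p dvd v2 * (x * v1 + y * u1) - v1 * (x * v2 + y * u2)"
    using e1 e2 by (simp_all add: dvd_diff)
  hence "int p dvd x * D" "int p dvd y * D" unfolding D_def by (simp_all add: algebra_simps)
  hence "int p dvd x" "int p dvd y" using ip D by (simp_all add: prime_dvd_mult_iff)
  thus ?thesis using Zp_eq_if_dvd_diff jt unfolding x_def y_def by blast
qed

lemma lam_eq_card_fibre:
  assumes "prime p" "valid_frame p u v" "j \<in> Zp p"
  shows "lam p A u v j = card (fibre p A u v j)"
proof -
  have "{a \<in> A. \<exists>t \<in> Zp p. a = frame_point p u v j t} = frame_point p u v j ` fibre p A u v j"
    unfolding fibre_def by auto
  moreover have "inj_on (frame_point p u v j) (fibre p A u v j)"
    unfolding inj_on_def fibre_def using frame_point_inj[OF assms(1,2,3,3)] by blast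
  ultimately show ?thesis unfolding lam_frame_point by (simp add: card_image)
qed

text \<open>The coordinate map \<open>(j, t) \<mapsto> j v + t u\<close> is linear and injective.\<close>

lemma zero_sum_subset_from_frame:
  assumes p: "prime p" and frame: "valid_frame p u v"
    and X: "X \<subseteq> Zp p \<times> Zp p" "(\<lambda>x. frame_point p u v (fst x) (snd x)) ` X \<subseteq> A" "X \<noteq> {}"
    and sums: "(\<Sum>x\<in>X. fst x) mod int p = 0" "(\<Sum>x\<in>X. snd x) mod int p = 0"
  shows "\<exists>B \<subseteq> A. B \<noteq> {} \<and> (\<Sum>b\<in>B. fst b) mod int p = 0 \<and> (\<Sum>b\<in>B. snd b) mod int p = 0"
proof -
  define \<phi> where "\<phi> x = frame_point p u v (fst x) (snd x)" for x
  have inj: "inj_on \<phi> X"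
  proof (rule inj_onI)
    fix x y assume xy: "x \<in> X" "y \<in> X" "\<phi> x = \<phi> y"
    have "fst x \<in> Zp p" "fst y \<in> Zp p" "snd x \<in> Zp p" "snd y \<in> Zp p" using xy X(1) by auto
    from frame_point_inj[OF p frame this] xy(3) show "x = y" unfolding \<phi>_def by (simp add: prod_eq_iff)
  qed
  have linear: "(\<Sum>x\<in>X. (fst x * a + snd x * b) mod int p) mod int p = 0" for a b
  proof -
    have "(\<Sum>x\<in>X. (fst x * a + snd x * b) mod int p) mod int p = (a * (\<Sum>x\<in>X. fst x) + b * (\<Sum>x\<in>X. snd x)) mod int p"
      by (simp add: mod_sum_eq sum.distrib sum_distrib_left mult.commute)
    thus ?thesis using sums by (metis dvd_add dvd_eq_mod_eq_0 dvd_mult)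
  qed
  have "(\<Sum>b\<in>\<phi> ` X. fst b) mod int p = 0" "(\<Sum>b\<in>\<phi> ` X. snd b) mod int p = 0"
    unfolding sum.reindex[OF inj] using linear by (simp_all add: \<phi>_def frame_point_def)
  moreover have "\<phi> ` X \<subseteq> A" "\<phi> ` X \<noteq> {}" using X(2,3) unfolding \<phi>_def by auto
  ultimately show ?thesis by (intro exI[of _ "\<phi> ` X"]) simp
qed

section \<open>Condition (1)\<close>

lemma exists_bounded_summands:
  fixes cap :: "'a \<Rightarrow> nat"
  assumes "finite S" "M \<le> (\<Sum>i\<in>S. cap i)"
  shows "\<exists>x. (\<forall>i\<in>S. x i \<le> cap i) \<and> (\<Sum>i\<in>S. x i) = M"
  using assms
proof (induction S arbitrary: M rule: finite_induct)
  case empty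
  then show ?case by simp
next
  case (insert a F)
  show ?case
  proof (cases "M \<le> (\<Sum>i\<in>F. cap i)")
    case True
    then obtain x where x: "\<forall>i\<in>F. x i \<le> cap i" "(\<Sum>i\<in>F. x i) = M" using insert by blast
    have "(\<Sum>i\<in>F. (x(a := 0)) i) = (\<Sum>i\<in>F. x i)" using insert by (intro sum.cong) auto
    thus ?thesis using x insert by (intro exI[of _ "x(a := 0)"]) auto
  next
    case False
    define y where "y = cap(a := M - (\<Sum>i\<in>F. cap i))"
    have "(\<Sum>i\<in>F. y i) = (\<Sum>i\<in>F. cap i)" unfolding y_def using insert by (intro sum.cong) auto
    thus ?thesis using False insert by (intro exI[of _ y]) (auto simp: y_def)
  qed
qed

text \<open>Spread the excess \<open>x\<close> as evenly as possible over \<open>0, 1, \<dots>, h - 1\<close>.\<close>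

lemma strict_mono_seq_with_sum:
  fixes h L x :: nat
  assumes "h \<le> L" "x \<le> h * (L - h)"
  shows "\<exists>c. (\<forall>r r'. r < r' \<longrightarrow> r' < h \<longrightarrow> c r < c r') \<and> (\<forall>r<h. c r < L) \<and>
             (\<Sum>r<h. c r) = (\<Sum>r<h. r) + x"
proof (cases "h = 0")
  case True
  thus ?thesis using assms by (intro exI[of _ id]) auto
next
  case False
  define q where "q = x div h"
  define s where "s = x mod h"
  have x: "x = h * q + s" and s: "s < h" unfolding q_def s_def using False by simp_all
  define g where "g r = q + (if h - s \<le> r then 1 else 0)" for r
  have "(\<Sum>r<h. g r) = h * q + card {h - s..<h}"
    unfolding g_def by (simp add: sum.distrib sum.If_cases Int_def conj_commute atLeastLessThan_def)
  hence sum_g: "(\<Sum>r<h. g r) = x" using x s by simp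
  have "g r \<le> L - h" if "r < h" for r
  proof (cases "s = 0")
    case True
    hence "q \<le> L - h" using assms(2) x False by simp
    thus ?thesis using True that by (simp add: g_def)
  next
    case False
    hence "h * q < h * (L - h)" using assms(2) x by linarith
    thus ?thesis by (simp add: g_def)
  qed
  moreover have "r < r' \<Longrightarrow> g r \<le> g r'" for r r' by (auto simp: g_def)
  ultimately show ?thesis
    using assms(1) sum_g by (intro exI[of _ "\<lambda>r. r + g r"]) (force simp: sum.distrib)
qed

lemma card_block_pairs_enumeration:
  assumes f: "bij_betw f {0..<n} (SIGMA j:I. {..<h j})" and I: "finite I" and g: "inj_on g I"
  shows "real (card (block_pairs n (\<lambda>k. g (fst (f k))))) = (\<Sum>j\<in>I. real (h j) * (real (h j) - 1) / 2)"
proof -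
  define blk where "blk k = g (fst (f k))" for k
  have fk: "fst (f k) \<in> I" "snd (f k) < h (fst (f k))" if "k < n" for k
  proof -
    have "f k \<in> (SIGMA j:I. {..<h j})" using bij_betwE[OF f] that by simp
    thus "fst (f k) \<in> I" "snd (f k) < h (fst (f k))" by auto
  qed
  have block: "card (block_of n blk k) = h (fst (f k))" if k: "k < n" for k
  proof -
    have "block_of n blk k = {k' \<in> {0..<n}. fst (f k') = fst (f k)}"
      unfolding block_of_def blk_def using fk k g by (auto simp: inj_on_eq_iff)
    moreover have "inj_on f {k' \<in> {0..<n}. fst (f k') = fst (f k)}"
      using f by (auto simp: bij_betw_def intro: inj_on_subset)
    ultimately have "card (block_of n blk k) = card (f ` {k' \<in> {0..<n}. fst (f k') = fst (f k)})"
      by (simp add: card_image)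
    also have "f ` {k' \<in> {0..<n}. fst (f k') = fst (f k)} = {w \<in> f ` {0..<n}. fst w = fst (f k)}"
      by auto
    also have "\<dots> = {fst (f k)} \<times> {..<h (fst (f k))}"
      using f fk[OF k] unfolding bij_betw_def by auto
    finally show ?thesis by (simp add: card_cartesian_product)
  qed
  have "real (card (block_pairs n blk)) = (\<Sum>k<n. (real (h (fst (f k))) - 1) / 2)"
    unfolding card_block_pairs_sum_block_of by (rule sum.cong) (auto simp: block)
  also have "\<dots> = (\<Sum>w\<in>(SIGMA j:I. {..<h j}). (real (h (fst w)) - 1) / 2)"
    using sum.reindex_bij_betw[OF f] by (simp add: lessThan_atLeast0)
  also have "\<dots> = (\<Sum>j\<in>I. \<Sum>r<h j. (real (h j) - 1) / 2)"
    using I by (subst sum.Sigma) (auto simp: split_def)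
  also have "\<dots> = (\<Sum>j\<in>I. real (h j) * (real (h j) - 1) / 2)"
    by simp
  finally show ?thesis unfolding blk_def .
qed

lemma exists_strict_mono_families:
  fixes h L :: "'a \<Rightarrow> nat"
  assumes I: "finite I" and h: "\<And>j. j \<in> I \<Longrightarrow> h j \<le> L j" and M: "M \<le> (\<Sum>j\<in>I. h j * (L j - h j))"
  shows "\<exists>c. (\<forall>j\<in>I. \<forall>r r'. r < r' \<longrightarrow> r' < h j \<longrightarrow> c j r < c j r') \<and> (\<forall>j\<in>I. \<forall>r<h j. c j r < L j) \<and>
             (\<Sum>j\<in>I. \<Sum>r<h j. c j r) = (\<Sum>j\<in>I. \<Sum>r<h j. r) + M"
proof -
  obtain x where x: "\<forall>j\<in>I. x j \<le> h j * (L j - h j)" "(\<Sum>j\<in>I. x j) = M"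
    using exists_bounded_summands[OF I M] by blast
  have "\<forall>j\<in>I. \<exists>c. (\<forall>r r'. r < r' \<longrightarrow> r' < h j \<longrightarrow> c r < c r') \<and> (\<forall>r<h j. c r < L j) \<and>
                  (\<Sum>r<h j. c r) = (\<Sum>r<h j. r) + x j"
    using x(1) h by (intro ballI strict_mono_seq_with_sum) auto
  from bchoice[OF this] obtain c where c: "\<forall>j\<in>I. (\<forall>r r'. r < r' \<longrightarrow> r' < h j \<longrightarrow> c j r < c j r') \<and>
      (\<forall>r<h j. c j r < L j) \<and> (\<Sum>r<h j. c j r) = (\<Sum>r<h j. r) + x j" ..
  hence "(\<Sum>j\<in>I. \<Sum>r<h j. c j r) = (\<Sum>j\<in>I. \<Sum>r<h j. r) + M"
    using x(2) by (simp add: sum.distrib)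
  thus ?thesis using c by blast
qed

text \<open>One block of variables per fibre \<open>j\<close>, enumerated by \<open>f\<close>, with strictly increasing grid
  sizes \<open>c\<^sub>j\<^sub>,\<^sub>0 < c\<^sub>j\<^sub>,\<^sub>1 < \<dots>\<close>: their total exceeds the number of pairs inside blocks by exactly
  \<open>p - 1\<close>, so \<open>card_restricted_sums_gt\<close> applies with \<open>m = p - 1\<close>.\<close>

lemma restricted_sums_fibre_enumeration:
  fixes h :: "int \<Rightarrow> nat" and c :: "int \<Rightarrow> nat \<Rightarrow> nat"
  assumes p: "prime p" and f: "bij_betw f {0..<n} (SIGMA j:Zp p. {..<h j})"
    and c_mono: "\<forall>j\<in>Zp p. \<forall>r r'. r < r' \<longrightarrow> r' < h j \<longrightarrow> c j r < c j r'"
    and c_sum: "(\<Sum>j\<in>Zp p. \<Sum>r<h j. c j r) = (\<Sum>j\<in>Zp p. \<Sum>r<h j. r) + (p - 1)"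
    and B: "\<And>k. k < n \<Longrightarrow> B k \<subseteq> Zp p \<and> card (B k) = Suc (c (fst (f k)) (snd (f k)))"
  shows "restricted_sums p n (\<lambda>k. nat (fst (f k))) B = Zp p"
proof -
  define blk where "blk k = nat (fst (f k))" for k
  define cv where "cv k = c (fst (f k)) (snd (f k))" for k
  have p1: "1 < p" using p prime_gt_1_nat by blast
  have fk: "fst (f k) \<in> Zp p" "snd (f k) < h (fst (f k))" if "k < n" for k
  proof -
    have "f k \<in> (SIGMA j:Zp p. {..<h j})" using bij_betwE[OF f] that by simp
    thus "fst (f k) \<in> Zp p" "snd (f k) < h (fst (f k))" by auto
  qed
  have inj_nat: "inj_on nat (Zp p)" by (auto simp: Zp_def inj_on_def)
  have cdist: "cv k \<noteq> cv k'" if "k < n" "k' < n" "k \<noteq> k'" "blk k = blk k'" for k k'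
  proof -
    have same: "fst (f k) = fst (f k')"
      using that fk inj_nat unfolding blk_def by (auto simp: inj_on_eq_iff)
    moreover have "f k \<noteq> f k'" using f that by (auto simp: bij_betw_def inj_on_eq_iff)
    ultimately have "snd (f k) \<noteq> snd (f k')" by (simp add: prod_eq_iff)
    thus ?thesis
      using c_mono fk[OF that(1)] fk[OF that(2)] same unfolding cv_def
      by (metis linorder_neqE_nat less_irrefl)
  qed
  have "total_degree n cv = (\<Sum>j\<in>Zp p. \<Sum>r<h j. c j r)"
    unfolding total_degree_def cv_def using sum.reindex_bij_betw[OF f, of "\<lambda>w. c (fst w) (snd w)"]
    by (simp add: lessThan_atLeast0 sum.Sigma finite_Zp split_def)
  moreover have "real (\<Sum>j\<in>Zp p. \<Sum>r<h j. r) = real (card (block_pairs n blk))"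
  proof -
    have gauss: "(\<Sum>r<k. real r) = real k * (real k - 1) / 2" for k
      by (induction k) (auto simp: field_simps)
    show ?thesis unfolding blk_def card_block_pairs_enumeration[OF f finite_Zp inj_nat] of_nat_sum gauss ..
  qed
  ultimately have "total_degree n cv = card (block_pairs n blk) + (p - 1)"
    using c_sum by (simp only: of_nat_eq_iff)
  hence "p - 1 < card (restricted_sums p n blk B)"
    using p1 B cdist unfolding cv_def by (intro card_restricted_sums_gt[OF p]) (auto simp: Zp_def)
  hence "restricted_sums p n blk B = {0..<int p}"
    using restricted_sums_subset[of p n blk B] p1
    by (intro card_subset_eq) (auto dest: card_mono[rotated])
  thus ?thesis unfolding blk_def Zp_def .
qed

lemma fibre_subsets_with_sum:
  fixes T :: "int \<Rightarrow> int set" and h :: "int \<Rightarrow> nat"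
  assumes p: "prime p"
    and T: "\<And>j. j \<in> Zp p \<Longrightarrow> T j \<subseteq> Zp p"
    and h: "\<And>j. j \<in> Zp p \<Longrightarrow> h j \<le> card (T j)"
    and room: "p - 1 \<le> (\<Sum>j\<in>Zp p. h j * (card (T j) - h j))"
  shows "\<exists>Y \<subseteq> Sigma (Zp p) T. card Y = (\<Sum>j\<in>Zp p. h j) \<and>
           (\<Sum>y\<in>Y. fst y) = (\<Sum>j\<in>Zp p. j * int (h j)) \<and> (\<Sum>y\<in>Y. snd y) mod int p = s mod int p"
proof -
  have p1: "1 < p" using p prime_gt_1_nat by blast
  obtain c where c: "\<forall>j\<in>Zp p. \<forall>r r'. r < r' \<longrightarrow> r' < h j \<longrightarrow> c j r < c j r'"
      "\<forall>j\<in>Zp p. \<forall>r<h j. c j r < card (T j)"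
      "(\<Sum>j\<in>Zp p. \<Sum>r<h j. c j r) = (\<Sum>j\<in>Zp p. \<Sum>r<h j. r) + (p - 1)"
    using exists_strict_mono_families[OF finite_Zp h room] by blast
  define V where "V = (SIGMA j:Zp p. {..<h j})"
  define n where "n = card V"
  have fV: "finite V" unfolding V_def by (simp add: finite_Zp)
  obtain f where f: "bij_betw f {0..<n} V" using ex_bij_betw_nat_finite[OF fV] unfolding n_def by blast
  have fk: "fst (f k) \<in> Zp p" "snd (f k) < h (fst (f k))" if "k < n" for k
  proof -
    have "f k \<in> V" using bij_betwE[OF f] that by simp
    thus "fst (f k) \<in> Zp p" "snd (f k) < h (fst (f k))" unfolding V_def by auto
  qed
  have "\<forall>k\<in>{..<n}. \<exists>S. S \<subseteq> T (fst (f k)) \<and> card S = Suc (c (fst (f k)) (snd (f k)))"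
  proof
    fix k assume "k \<in> {..<n}"
    hence "Suc (c (fst (f k)) (snd (f k))) \<le> card (T (fst (f k)))"
      using c(2) fk by (simp add: Suc_le_eq)
    thus "\<exists>S. S \<subseteq> T (fst (f k)) \<and> card S = Suc (c (fst (f k)) (snd (f k)))"
      by (meson obtain_subset_with_card_n)
  qed
  from bchoice[OF this] obtain B
    where B: "\<forall>k\<in>{..<n}. B k \<subseteq> T (fst (f k)) \<and> card (B k) = Suc (c (fst (f k)) (snd (f k)))" ..
  have "restricted_sums p n (\<lambda>k. nat (fst (f k))) B = Zp p"
  proof (rule restricted_sums_fibre_enumeration[OF p f[unfolded V_def] c(1,3)])
    fix k assume k: "k < n"
    have "B k \<subseteq> T (fst (f k))" using B k by simp
    also have "\<dots> \<subseteq> Zp p" using T fk(1)[OF k] .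
    finally show "B k \<subseteq> Zp p \<and> card (B k) = Suc (c (fst (f k)) (snd (f k)))" using B k by simp
  qed
  hence "s mod int p \<in> restricted_sums p n (\<lambda>k. nat (fst (f k))) B" using p1 by (simp add: mod_in_Zp)
  then obtain a where a: "a \<in> PiE {..<n} B"
      "\<forall>i<n. \<forall>j<n. i \<noteq> j \<longrightarrow> nat (fst (f i)) = nat (fst (f j)) \<longrightarrow> a i \<noteq> a j"
      "(\<Sum>i<n. a i) mod int p = s mod int p"
    unfolding restricted_sums_def by auto
  define Y where "Y = (\<lambda>k. (fst (f k), a k)) ` {..<n}"
  have inj: "inj_on (\<lambda>k. (fst (f k), a k)) {..<n}"
    using a(2) by (auto simp: inj_on_def) (metis)
  have "(fst (f k), a k) \<in> Sigma (Zp p) T" if "k < n" for k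
    using fk[OF that] B PiE_mem[OF a(1)] that by auto
  hence "Y \<subseteq> Sigma (Zp p) T" unfolding Y_def by auto
  moreover have "card Y = (\<Sum>j\<in>Zp p. h j)"
    unfolding Y_def card_image[OF inj] using n_def V_def by (simp add: card_SigmaI finite_Zp)
  moreover have "(\<Sum>y\<in>Y. fst y) = (\<Sum>j\<in>Zp p. j * int (h j))"
  proof -
    have "(\<Sum>y\<in>Y. fst y) = (\<Sum>w\<in>V. fst w)"
      unfolding Y_def sum.reindex[OF inj] using sum.reindex_bij_betw[OF f, of fst]
      by (simp add: lessThan_atLeast0)
    also have "\<dots> = (\<Sum>j\<in>Zp p. \<Sum>r<h j. j)"
      unfolding V_def by (subst sum.Sigma) (auto simp: finite_Zp split_def)
    finally show ?thesis by (simp add: mult.commute)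
  qed
  moreover have "(\<Sum>y\<in>Y. snd y) mod int p = s mod int p"
    unfolding Y_def sum.reindex[OF inj] using a(3) by simp
  ultimately show ?thesis by (intro exI[of _ Y]) simp
qed

lemma near_half_product:
  fixes l :: nat
  assumes "b \<Longrightarrow> odd l"
  shows "l div 2 + of_bool b \<le> l \<and>
         (l div 2 + of_bool b) * (l - (l div 2 + of_bool b)) = (l div 2) * ((l + 1) div 2)"
proof (cases b)
  case True
  then obtain q where "l = 2 * q + 1" using assms by (metis oddE)
  thus ?thesis using True by simp
next
  case False
  have "l - l div 2 = (l + 1) div 2" by presburger
  thus ?thesis using False by simp
qed

text \<open>Taking the points \<open>e\<^sub>i\<close> and \<open>h\<^sub>j\<close> further points from each fibre fixes the first
  coordinate of the total; the second one is then adjusted by \<open>fibre_subsets_with_sum\<close>.\<close>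

lemma zero_sum_subset_from_fibres:
  fixes T' :: "int \<Rightarrow> int set" and h :: "int \<Rightarrow> nat" and E :: "int set"
  assumes p: "prime p" and frame: "valid_frame p u v"
    and T': "\<And>j. T' j \<subseteq> fibre p A u v j" and h: "\<And>j. j \<in> Zp p \<Longrightarrow> h j \<le> card (T' j)"
    and room: "p - 1 \<le> (\<Sum>j\<in>Zp p. h j * (card (T' j) - h j))"
    and E: "E \<subseteq> Zp p" and e: "\<forall>i\<in>E. e i \<in> fibre p A u v i - T' i"
    and balance: "((\<Sum>j\<in>Zp p. j * int (h j)) + \<Sum>E) mod int p = 0"
  shows "\<exists>B \<subseteq> A. B \<noteq> {} \<and> (\<Sum>b\<in>B. fst b) mod int p = 0 \<and> (\<Sum>b\<in>B. snd b) mod int p = 0"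
proof -
  have p1: "1 < p" using p prime_gt_1_nat by blast
  have TZ: "fibre p A u v j \<subseteq> Zp p" for j unfolding fibre_def by auto
  have T'Z: "T' j \<subseteq> Zp p" for j using T' TZ by (rule order.trans)
  obtain Y where Y: "Y \<subseteq> Sigma (Zp p) T'" "card Y = (\<Sum>j\<in>Zp p. h j)"
      "(\<Sum>y\<in>Y. fst y) = (\<Sum>j\<in>Zp p. j * int (h j))"
      "(\<Sum>y\<in>Y. snd y) mod int p = (- (\<Sum>i\<in>E. e i)) mod int p"
    using fibre_subsets_with_sum[of p T' h "- (\<Sum>i\<in>E. e i)", OF p T'Z h room] by auto
  define X where "X = (\<lambda>i. (i, e i)) ` E"
  have fin_E: "finite E" using E finite_Zp finite_subset by blast
  have fin_Y: "finite Y" using Y(1) T'Z by (meson finite_SigmaI finite_Zp finite_subset)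
  have disj: "Y \<inter> X = {}" using Y(1) e unfolding X_def by auto
  have inj_X: "inj_on (\<lambda>i. (i, e i)) E" by (auto simp: inj_on_def)
  have sum_YX: "(\<Sum>x\<in>Y \<union> X. g x) = (\<Sum>y\<in>Y. g y) + (\<Sum>i\<in>E. g (i, e i))" for g :: "int \<times> int \<Rightarrow> int"
    using disj fin_Y fin_E unfolding X_def by (simp add: sum.union_disjoint sum.reindex[OF inj_X])
  show ?thesis
  proof (rule zero_sum_subset_from_frame[OF p frame, of "Y \<union> X"])
    have "Y \<subseteq> Zp p \<times> Zp p" using Y(1) T'Z by fastforce
    moreover have "X \<subseteq> Zp p \<times> Zp p" unfolding X_def using e E TZ by auto
    ultimately show "Y \<union> X \<subseteq> Zp p \<times> Zp p" by simp
    show "(\<lambda>x. frame_point p u v (fst x) (snd x)) ` (Y \<union> X) \<subseteq> A"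
    proof (rule image_subsetI)
      fix x assume "x \<in> Y \<union> X"
      hence "snd x \<in> T' (fst x) \<or> (x \<in> X)" using Y(1) by auto
      hence "snd x \<in> fibre p A u v (fst x)" using T' e unfolding X_def by auto
      thus "frame_point p u v (fst x) (snd x) \<in> A" unfolding fibre_def by simp
    qed
    have "(\<Sum>j\<in>Zp p. h j) \<noteq> 0"
    proof
      assume "(\<Sum>j\<in>Zp p. h j) = 0"
      hence "(\<Sum>j\<in>Zp p. h j * (card (T' j) - h j)) = 0" using finite_Zp by simp
      thus False using room p1 by simp
    qed
    hence "Y \<noteq> {}" using Y(2) by auto
    thus "Y \<union> X \<noteq> {}" by simp
    have "(\<Sum>x\<in>Y \<union> X. fst x) = (\<Sum>j\<in>Zp p. j * int (h j)) + \<Sum>E"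
      using sum_YX[of fst] Y(3) by simp
    thus "(\<Sum>x\<in>Y \<union> X. fst x) mod int p = 0" using balance by simp
    have "(\<Sum>x\<in>Y \<union> X. snd x) = (\<Sum>y\<in>Y. snd y) + (\<Sum>i\<in>E. e i)"
      using sum_YX[of snd] by simp
    hence "(\<Sum>x\<in>Y \<union> X. snd x) mod int p = ((\<Sum>y\<in>Y. snd y) mod int p + (\<Sum>i\<in>E. e i)) mod int p"
      by (simp add: mod_add_left_eq)
    also have "\<dots> = ((- (\<Sum>i\<in>E. e i)) mod int p + (\<Sum>i\<in>E. e i)) mod int p" using Y(4) by simp
    finally show "(\<Sum>x\<in>Y \<union> X. snd x) mod int p = 0" by (simp add: mod_add_left_eq)
  qed
qed

text \<open>Set aside one point \<open>e\<^sub>i\<close> of each fibre \<open>i \<in> I\<close>, pick \<open>K \<subseteq> I \<union> J\<close> whose sum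
  compensates the first coordinate of \<open>\<lfloor>\<lambda>\<^sub>j\<^sup>*/2\<rfloor>\<close> points from each fibre, and take one point
  more from the fibres in \<open>K - I\<close> (where \<open>\<lambda>\<^sub>j\<^sup>*\<close> is odd) and the points \<open>e\<^sub>i\<close> with \<open>i \<in> K \<inter> I\<close>.\<close>

lemma zero_sum_subset_condition1:
  fixes I :: "int set"
  assumes p: "prime p" and frame: "valid_frame p u v"
    and I: "I \<subseteq> Zp p" "\<forall>i\<in>I. lam p A u v i \<ge> 1"
    and sums: "subset_sums p (I \<union> {j \<in> Zp p. odd (lam p A u v j)}) = Zp p"
    and room: "(\<Sum>i\<in>Zp p. let ls = (if i \<in> I then lam p A u v i - 1 else lam p A u v i) in
                   (ls div 2) * ((ls + 1) div 2)) \<ge> p - 1"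
  shows "\<exists>B \<subseteq> A. B \<noteq> {} \<and> (\<Sum>b\<in>B. fst b) mod int p = 0 \<and> (\<Sum>b\<in>B. snd b) mod int p = 0"
proof -
  define lm where "lm = lam p A u v"
  define ls where "ls i = (if i \<in> I then lm i - 1 else lm i)" for i
  define T where "T = fibre p A u v"
  have p1: "1 < p" using p prime_gt_1_nat by blast
  have card_T: "card (T j) = lm j" if "j \<in> Zp p" for j
    unfolding T_def lm_def using lam_eq_card_fibre[OF p frame that] by simp
  have fin_T: "finite (T j)" for j
    unfolding T_def fibre_def using finite_Zp by simp
  have "\<forall>i\<in>I. \<exists>t. t \<in> T i"
    using I card_T by (metis card.empty le_zero_eq lm_def not_one_le_zero subsetD equals0I)
  from bchoice[OF this] obtain e where e: "\<forall>i\<in>I. e i \<in> T i" ..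
  define T' where "T' i = (if i \<in> I then T i - {e i} else T i)" for i
  have card_T': "card (T' j) = ls j" if "j \<in> Zp p" for j
    unfolding T'_def ls_def using card_T[OF that] e fin_T by (auto simp: card_Diff_singleton)
  define base where "base = (\<Sum>j\<in>Zp p. j * int (ls j div 2))"
  have "(- base) mod int p \<in> subset_sums p (I \<union> {j \<in> Zp p. odd (lm j)})"
    using sums mod_in_Zp[of p "- base"] p1 unfolding lm_def by simp
  then obtain K where K: "K \<subseteq> I \<union> {j \<in> Zp p. odd (lm j)}" "(\<Sum>K) mod int p = (- base) mod int p"
    unfolding subset_sums_def by auto
  have KZ: "K \<subseteq> Zp p" using K(1) I(1) by auto
  hence fin_K: "finite K" using finite_Zp finite_subset by blast
  define h where "h j = ls j div 2 + of_bool (j \<in> K - I)" for j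
  have h: "h j \<le> ls j" "h j * (ls j - h j) = (ls j div 2) * ((ls j + 1) div 2)" for j
    using near_half_product[of "j \<in> K - I" "ls j"] K(1) unfolding h_def ls_def by auto
  have "(\<Sum>j\<in>Zp p. h j * (card (T' j) - h j)) = (\<Sum>j\<in>Zp p. (ls j div 2) * ((ls j + 1) div 2))"
    by (rule sum.cong) (simp_all add: card_T' h(2))
  hence room': "p - 1 \<le> (\<Sum>j\<in>Zp p. h j * (card (T' j) - h j))"
    using room unfolding ls_def lm_def Let_def by simp
  have "(\<Sum>j\<in>Zp p. j * int (h j)) = base + (\<Sum>j\<in>Zp p. if j \<in> K - I then j else 0)"
    unfolding base_def h_def sum.distrib[symmetric] by (rule sum.cong) (auto simp: algebra_simps)
  also have "(\<Sum>j\<in>Zp p. if j \<in> K - I then j else 0) = \<Sum>(K - I)"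
  proof -
    have "Zp p \<inter> {j \<in> K. j \<notin> I} = K - I" using KZ by auto
    thus ?thesis by (simp add: sum.If_cases finite_Zp)
  qed
  finally have "((\<Sum>j\<in>Zp p. j * int (h j)) + \<Sum>(K \<inter> I)) mod int p = (base + \<Sum>K) mod int p"
    using fin_K by (simp add: sum.Int_Diff[of K _ I] add.commute add.left_commute)
  also have "(base + \<Sum>K) mod int p = (base + - base) mod int p"
    using K(2) by (metis mod_add_right_eq)
  finally have balance: "((\<Sum>j\<in>Zp p. j * int (h j)) + \<Sum>(K \<inter> I)) mod int p = 0" by simp
  show ?thesis
  proof (rule zero_sum_subset_from_fibres[OF p frame _ _ room' _ _ balance])
    show "T' j \<subseteq> fibre p A u v j" for j unfolding T'_def T_def by auto
    show "h j \<le> card (T' j)" if "j \<in> Zp p" for j using h(1) card_T'[OF that] by simp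
    show "K \<inter> I \<subseteq> Zp p" using KZ by auto
    show "\<forall>i\<in>K \<inter> I. e i \<in> fibre p A u v i - T' i" using e unfolding T'_def T_def by auto
  qed
qed

section \<open>Level sets of linear forms\<close>

lemma exists_inverse_mod_prime:
  assumes p: "prime p" and x: "x \<in> Zp p" "x \<noteq> 0"
  shows "\<exists>y\<in>Zp p. (x * y) mod int p = 1"
proof -
  have p1: "1 < p" using p prime_gt_1_nat by blast
  have "\<not> int p dvd x" using x unfolding Zp_def by (auto dest: zdvd_imp_le)
  hence "coprime (int p) x" using p by (simp add: prime_imp_coprime prime_nat_int_transfer)
  hence "gcd x (int p) = 1" by (simp add: coprime_iff_gcd_eq_1 gcd.commute)
  then obtain a b where ab: "a * x + b * int p = 1" using bezout_int[of x "int p"] by metis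
  have "(x * (a mod int p)) mod int p = (a * x + b * int p) mod int p"
    by (simp add: mod_simps algebra_simps)
  hence "(x * (a mod int p)) mod int p = 1" using ab p1 by simp
  moreover have "a mod int p \<in> Zp p" using p1 by (simp add: mod_in_Zp)
  ultimately show ?thesis by blast
qed

lemma exists_dual_vector:
  assumes p: "prime p" and k: "k \<in> Zp2 p" "k \<noteq> (0, 0)"
  shows "\<exists>v\<in>Zp2 p. (fst k * fst v + snd k * snd v) mod int p = 1"
proof (cases "fst k = 0")
  case False
  moreover have "fst k \<in> Zp p" using k(1) by (auto simp: Zp2_def)
  ultimately obtain y where "y \<in> Zp p" "(fst k * y) mod int p = 1"
    using exists_inverse_mod_prime[OF p] by blast
  moreover have "0 \<in> Zp p" using p prime_gt_0_nat by (auto simp: Zp_def)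
  ultimately show ?thesis by (intro bexI[of _ "(y, 0)"]) (auto simp: Zp2_def)
next
  case True
  hence "snd k \<noteq> 0" using k(2) by (cases k) auto
  moreover have "snd k \<in> Zp p" using k(1) by (auto simp: Zp2_def)
  ultimately obtain y where "y \<in> Zp p" "(snd k * y) mod int p = 1"
    using exists_inverse_mod_prime[OF p] by blast
  moreover have "0 \<in> Zp p" using p prime_gt_0_nat by (auto simp: Zp_def)
  ultimately show ?thesis using True by (intro bexI[of _ "(0, y)"]) (auto simp: Zp2_def)
qed

lemma frame_point_mod: "frame_point p (a mod int p, b mod int p) v j (t mod int p) = frame_point p (a, b) v j t"
proof -
  have "(x + (t mod int p) * (c mod int p)) mod int p = (x + t * c) mod int p" for x c
  proof -
    have "(t mod int p) * (c mod int p) mod int p = (t * c) mod int p" by (simp add: mod_mult_eq)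
    thus ?thesis by (metis mod_add_right_eq)
  qed
  thus ?thesis unfolding frame_point_def by simp
qed

text \<open>For \<open>k \<noteq> 0\<close> the cosets of \<open>ker k\<close> are the level sets of the linear form \<open>k\<close>.
  With \<open>u = (-k\<^sub>2, k\<^sub>1)\<close> and \<open>k \<cdot> v = 1\<close>, the coordinate \<open>t\<close> of a point \<open>a\<close> on the coset
  \<open>j v + \<langle>u\<rangle>\<close> is given by Cramer's rule, \<open>t = -det(a - j v, v)\<close>.\<close>

lemma frame_point_level_set:
  assumes p1: "1 < p" and j: "j \<in> Zp p" and a: "a \<in> Zp2 p" and k1: "k1 \<in> Zp p"
   and dual: "int p dvd k1 * v1 + k2 * v2 - 1"
   and d: "(k1 * v1 + k2 * v2) mod int p = 1" and u: "u = ((- k2) mod int p, k1)"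
  shows "(\<exists>t\<in>Zp p. a = frame_point p u (v1, v2) j t) \<longleftrightarrow> (k1 * fst a + k2 * snd a) mod int p = j"
proof -
  have u': "frame_point p u (v1, v2) j (t mod int p) = frame_point p (- k2, k1) (v1, v2) j t" for t
    using frame_point_mod[of p "- k2" k1 "(v1, v2)" j t] k1 unfolding u by (simp add: Zp_def)
  obtain a1 a2 where aa: "a = (a1, a2)" by (cases a)
  have a12: "a1 \<in> Zp p" "a2 \<in> Zp p" using a unfolding aa Zp2_def by auto
  show ?thesis
  proof
    assume "\<exists>t\<in>Zp p. a = frame_point p u (v1, v2) j t"
    then obtain t where "a = frame_point p (- k2, k1) (v1, v2) j t"
      using u' by (metis Zp_def atLeastLessThan_iff mod_pos_pos_trivial)
    hence "a1 = (j * v1 - t * k2) mod int p" "a2 = (j * v2 + t * k1) mod int p"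
      unfolding aa frame_point_def by simp_all
    hence "(k1 * a1 + k2 * a2) mod int p = (k1 * (j * v1 - t * k2) + k2 * (j * v2 + t * k1)) mod int p"
      by (metis mod_add_cong mod_mult_right_eq)
    also have "k1 * (j * v1 - t * k2) + k2 * (j * v2 + t * k1) = j * (k1 * v1 + k2 * v2)"
      by (simp add: algebra_simps)
    also have "(j * (k1 * v1 + k2 * v2)) mod int p = j"
      using d j unfolding Zp_def by (metis atLeastLessThan_iff mod_mult_right_eq mod_pos_pos_trivial mult.right_neutral)
    finally show "(k1 * fst a + k2 * snd a) mod int p = j" unfolding aa by simp
  next
    assume level: "(k1 * fst a + k2 * snd a) mod int p = j"
    define w1 where "w1 = a1 - j * v1"
    define w2 where "w2 = a2 - j * v2"
    define t where "t = - (w1 * v2 - w2 * v1)"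
    have "(k1 * a1 + k2 * a2) mod int p = j mod int p" using level j unfolding aa Zp_def by simp
    hence "int p dvd (k1 * a1 + k2 * a2) - j" by (simp only: mod_eq_dvd_iff)
    hence "int p dvd ((k1 * a1 + k2 * a2) - j) - j * (k1 * v1 + k2 * v2 - 1)" using dual by simp
    hence kw: "int p dvd k1 * w1 + k2 * w2" unfolding w1_def w2_def by (simp add: algebra_simps)
    have "a1 - (j * v1 + t * (- k2)) = (1 - (k1 * v1 + k2 * v2)) * w1 + (k1 * w1 + k2 * w2) * v1"
         "a2 - (j * v2 + t * k1) = (1 - (k1 * v1 + k2 * v2)) * w2 + (k1 * w1 + k2 * w2) * v2"
      unfolding t_def w1_def w2_def by (simp_all add: algebra_simps)
    moreover have "int p dvd 1 - (k1 * v1 + k2 * v2)" using dual by (simp add: dvd_diff_commute)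
    ultimately have "int p dvd a1 - (j * v1 + t * (- k2))" "int p dvd a2 - (j * v2 + t * k1)"
      using kw by simp_all
    hence "a1 mod int p = (j * v1 + t * (- k2)) mod int p" "a2 mod int p = (j * v2 + t * k1) mod int p"
      by (simp_all only: mod_eq_dvd_iff)
    hence "a = frame_point p (- k2, k1) (v1, v2) j t"
      using a12 unfolding aa frame_point_def Zp_def by simp
    thus "\<exists>t\<in>Zp p. a = frame_point p u (v1, v2) j t"
      using u'[of t] p1 by (intro bexI[of _ "t mod int p"]) (auto intro: mod_in_Zp)
  qed
qed

lemma linear_form_frame:
  assumes p: "prime p" and k: "k \<in> Zp2 p" "k \<noteq> (0, 0)"
  shows "\<exists>u v. valid_frame p u v \<and> (\<forall>a\<in>Zp2 p. \<forall>j\<in>Zp p.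
            (\<exists>t\<in>Zp p. a = frame_point p u v j t) \<longleftrightarrow> (fst k * fst a + snd k * snd a) mod int p = j)"
proof -
  obtain k1 k2 where kk: "k = (k1, k2)" by (cases k)
  have k1: "k1 \<in> Zp p" using k(1) unfolding kk Zp2_def by simp
  obtain v1 v2 where v: "(v1, v2) \<in> Zp2 p" "(k1 * v1 + k2 * v2) mod int p = 1"
    using exists_dual_vector[OF p k] kk by auto
  have p1: "1 < p" using p prime_gt_1_nat by blast
  have "(k1 * v1 + k2 * v2) mod int p = 1 mod int p" using v(2) p1 by simp
  hence dual: "int p dvd k1 * v1 + k2 * v2 - 1" by (simp only: mod_eq_dvd_iff)
  define u where "u = ((- k2) mod int p, k1)"
  have "(fst u * v2 - snd u * v1) mod int p = ((- k2) * v2 - k1 * v1) mod int p"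
    unfolding u_def fst_conv snd_conv by (metis mod_diff_eq mod_mult_left_eq)
  also have "(- k2) * v2 - k1 * v1 = - (k1 * v1 + k2 * v2)" by (simp add: algebra_simps)
  also have "(- (k1 * v1 + k2 * v2)) mod int p = (- 1) mod int p" using v(2) by (metis mod_minus_eq)
  also have "\<dots> = int p - 1" using p1 by (simp add: zmod_zminus1_eq_if)
  finally have "valid_frame p u (v1, v2)"
    using v(1) k1 p1 unfolding valid_frame_def u_def Zp2_def by (simp add: Zp_def)
  moreover note frame_point_level_set[OF p1 _ _ k1 dual v(2) u_def]
  ultimately show ?thesis unfolding kk by (intro exI[of _ u] exI[of _ "(v1, v2)"]) simp
qed

section \<open>Condition (2)\<close>

definition omega :: "nat \<Rightarrow> int \<Rightarrow> complex" where
  "omega p x = cis (2 * pi * real_of_int x / real p)"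

lemma omega_add: "omega p (x + y) = omega p x * omega p y"
  unfolding omega_def cis_mult by (simp add: add_divide_distrib distrib_left)

lemma omega_0: "omega p 0 = 1"
  unfolding omega_def by simp

lemma omega_int_multiple:
  assumes "0 < p"
  shows "omega p (int p * q) = 1"
proof -
  have "2 * pi * real_of_int (int p * q) / real p = 2 * pi * real_of_int q" using assms by (simp add: field_simps)
  moreover have "cis (2 * pi * real_of_int q) = 1" by (simp add: cis.ctr complex_eq_iff cos_int_2pin sin_int_2pin)
  ultimately show ?thesis unfolding omega_def by simp
qed

lemma omega_mod: "0 < p \<Longrightarrow> omega p x = omega p (x mod int p)"
  using omega_add[of p "x mod int p" "int p * (x div int p)"] omega_int_multiple[of p "x div int p"]
  by simp

lemma prod_omega: "(\<Prod>a\<in>B. omega p (g a)) = omega p (\<Sum>a\<in>B. g a)"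
  by (induction B rule: infinite_finite_induct) (simp_all add: omega_0 omega_add)

lemma omega_power: "omega p (int m * s) = omega p s ^ m"
  by (induction m) (auto simp: omega_0 distrib_right omega_add)

lemma omega_eq_1_iff:
  assumes "0 < p"
  shows "omega p s = 1 \<longleftrightarrow> int p dvd s"
proof
  assume "omega p s = 1"
  hence "cos (2 * pi * real_of_int s / real p) = 1" unfolding omega_def by (simp add: complex_eq_iff)
  then obtain q where "2 * pi * real_of_int s / real p = real_of_int q * 2 * pi"
    unfolding cos_one_2pi_int by blast
  hence "real_of_int s = real_of_int (q * int p)" using assms by (simp add: field_simps)
  thus "int p dvd s" by (simp only: of_int_eq_iff) simp
qed (use omega_int_multiple[OF assms] in \<open>auto elim: dvdE\<close>)

lemma sum_omega_Zp:
  assumes "0 < p"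
  shows "(\<Sum>k\<in>Zp p. omega p (k * s)) = (if int p dvd s then of_nat p else 0)"
proof -
  have "(\<Sum>k\<in>Zp p. omega p (k * s)) = (\<Sum>m<p. omega p s ^ m)"
  proof -
    have "Zp p = int ` {..<p}"
      unfolding Zp_def lessThan_atLeast0 image_int_atLeastLessThan by simp
    thus ?thesis by (simp add: sum.reindex omega_power)
  qed
  also have "\<dots> = (if int p dvd s then of_nat p else 0)"
  proof (cases "int p dvd s")
    case False
    hence "omega p s \<noteq> 1" using omega_eq_1_iff[OF assms] by simp
    moreover have "omega p s ^ p = 1" using omega_power[of p p s] omega_int_multiple[OF assms, of s] by simp
    ultimately show ?thesis using False geometric_sum[of "omega p s" p] by simp
  qed (use omega_eq_1_iff[OF assms, of s] in simp)
  finally show ?thesis .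
qed

lemma norm_1_plus_cis: "cmod (1 + cis t) = 2 * \<bar>cos (t / 2)\<bar>"
proof -
  have "(1 + cos t)\<^sup>2 + (sin t)\<^sup>2 = 2 + 2 * cos t"
    using sin_cos_squared_add[of t] by (simp add: power2_eq_square algebra_simps)
  also have "\<dots> = (2 * cos (t / 2))\<^sup>2"
    using cos_double_cos[of "t / 2"] by (simp add: power2_eq_square)
  finally have "cmod (1 + cis t) = sqrt ((2 * cos (t / 2))\<^sup>2)"
    by (simp add: cmod_def)
  thus ?thesis by (metis abs_mult abs_numeral real_sqrt_abs)
qed

lemma norm_1_plus_omega:
  "0 < p \<Longrightarrow> cmod (1 + omega p x) = 2 * \<bar>cos (real_of_int (x mod int p) * pi / real p)\<bar>"
  by (subst omega_mod) (simp_all add: omega_def norm_1_plus_cis field_simps)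

text \<open>Orthogonality of the characters \<open>a \<mapsto> \<omega>(k \<cdot> a)\<close> of \<open>\<int>\<^sub>p\<^sup>2\<close> counts the zero-sum subsets.\<close>

lemma card_zero_sum_subsets_fourier:
  assumes p: "0 < p" and A: "finite A"
  shows "of_nat (p\<^sup>2 * card {B. B \<subseteq> A \<and> (\<Sum>b\<in>B. fst b) mod int p = 0 \<and> (\<Sum>b\<in>B. snd b) mod int p = 0}) =
         (\<Sum>k\<in>Zp2 p. \<Prod>a\<in>A. 1 + omega p (fst k * fst a + snd k * snd a))"
proof -
  define S1 where "S1 B = (\<Sum>b\<in>B. fst b)" for B :: "(int \<times> int) set"
  define S2 where "S2 B = (\<Sum>b\<in>B. snd b)" for B :: "(int \<times> int) set"
  have expand: "(\<Prod>a\<in>A. 1 + omega p (fst k * fst a + snd k * snd a)) =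
                (\<Sum>B\<in>Pow A. omega p (fst k * S1 B + snd k * S2 B))" for k
  proof -
    have "(\<Prod>a\<in>A. 1 + omega p (fst k * fst a + snd k * snd a)) =
          (\<Sum>B\<in>Pow A. (\<Prod>a\<in>B. omega p (fst k * fst a + snd k * snd a)) * (\<Prod>a\<in>A - B. 1))"
      using prod_add[OF A, of "\<lambda>a. omega p (fst k * fst a + snd k * snd a)" "\<lambda>_. 1"] by (simp add: add.commute)
    thus ?thesis by (simp add: prod_omega S1_def S2_def sum_distrib_left sum.distrib)
  qed
  have orth: "(\<Sum>k\<in>Zp2 p. omega p (fst k * x + snd k * y)) = (if int p dvd x \<and> int p dvd y then of_nat (p\<^sup>2) else 0)"
    for x y
  proof -
    have "(\<Sum>k\<in>Zp2 p. omega p (fst k * x + snd k * y)) = (\<Sum>k1\<in>Zp p. omega p (k1 * x)) * (\<Sum>k2\<in>Zp p. omega p (k2 * y))"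
      unfolding Zp2_def sum_product sum.cartesian_product by (simp add: omega_add split_def)
    thus ?thesis by (simp add: sum_omega_Zp[OF p] power2_eq_square)
  qed
  have "(\<Sum>k\<in>Zp2 p. \<Prod>a\<in>A. 1 + omega p (fst k * fst a + snd k * snd a)) =
        (\<Sum>B\<in>Pow A. \<Sum>k\<in>Zp2 p. omega p (fst k * S1 B + snd k * S2 B))"
    unfolding expand by (rule sum.swap)
  also have "\<dots> = of_nat (p\<^sup>2) * of_nat (card {B \<in> Pow A. int p dvd S1 B \<and> int p dvd S2 B})"
    using A by (simp add: orth sum.If_cases Int_def)
  also have "{B \<in> Pow A. int p dvd S1 B \<and> int p dvd S2 B} =
             {B. B \<subseteq> A \<and> (\<Sum>b\<in>B. fst b) mod int p = 0 \<and> (\<Sum>b\<in>B. snd b) mod int p = 0}"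
    by (auto simp: dvd_eq_mod_eq_0 S1_def S2_def)
  finally show ?thesis by simp
qed

lemma norm_prod_1_plus_omega_le:
  assumes p: "prime p" and A: "A \<subseteq> Zp2 p" and k: "k \<in> Zp2 p" "k \<noteq> (0, 0)"
    and small: "\<forall>u v. valid_frame p u v \<longrightarrow>
           (\<Prod>j \<in> Zp p. \<bar>cos (real_of_int j * pi / real p)\<bar> ^ lam p A u v j) \<le> 1 / (real p)\<^sup>2"
  shows "cmod (\<Prod>a\<in>A. 1 + omega p (fst k * fst a + snd k * snd a)) \<le> 2 ^ card A / (real p)\<^sup>2"
proof -
  have p0: "0 < p" using p prime_gt_0_nat by blast
  have fin: "finite A" using A finite_subset[OF _ finite_SigmaI[OF finite_Zp finite_Zp]] by (auto simp: Zp2_def)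
  obtain u v where frame: "valid_frame p u v" and level: "\<forall>a\<in>Zp2 p. \<forall>j\<in>Zp p.
      (\<exists>t\<in>Zp p. a = frame_point p u v j t) \<longleftrightarrow> (fst k * fst a + snd k * snd a) mod int p = j"
    using linear_form_frame[OF p k] by blast
  define g where "g a = (fst k * fst a + snd k * snd a) mod int p" for a
  have gA: "g ` A \<subseteq> Zp p" unfolding g_def using p0 by (auto intro: mod_in_Zp)
  have "cmod (\<Prod>a\<in>A. 1 + omega p (fst k * fst a + snd k * snd a)) =
        (\<Prod>a\<in>A. 2 * \<bar>cos (real_of_int (g a) * pi / real p)\<bar>)"
    unfolding prod_norm[symmetric] g_def by (rule prod.cong) (simp_all add: norm_1_plus_omega[OF p0])
  also have "\<dots> = 2 ^ card A * (\<Prod>a\<in>A. \<bar>cos (real_of_int (g a) * pi / real p)\<bar>)"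
    by (simp add: prod.distrib)
  also have "(\<Prod>a\<in>A. \<bar>cos (real_of_int (g a) * pi / real p)\<bar>) =
             (\<Prod>j\<in>Zp p. \<Prod>a\<in>{a \<in> A. g a = j}. \<bar>cos (real_of_int (g a) * pi / real p)\<bar>)"
    by (rule prod.group[symmetric, OF fin finite_Zp gA])
  also have "\<dots> = (\<Prod>j\<in>Zp p. \<bar>cos (real_of_int j * pi / real p)\<bar> ^ lam p A u v j)"
  proof (rule prod.cong)
    fix j assume j: "j \<in> Zp p"
    have "{a \<in> A. g a = j} = {a \<in> A. \<exists>t\<in>Zp p. a = frame_point p u v j t}"
      using level j A unfolding g_def by auto
    hence "card {a \<in> A. g a = j} = lam p A u v j" by (simp add: lam_frame_point)
    thus "(\<Prod>a\<in>{a \<in> A. g a = j}. \<bar>cos (real_of_int (g a) * pi / real p)\<bar>) =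
          \<bar>cos (real_of_int j * pi / real p)\<bar> ^ lam p A u v j"
      by simp
  qed simp
  also have "2 ^ card A * (\<Prod>j\<in>Zp p. \<bar>cos (real_of_int j * pi / real p)\<bar> ^ lam p A u v j) \<le>
             2 ^ card A * (1 / (real p)\<^sup>2)"
    using small[rule_format, OF frame] by (intro mult_left_mono) auto
  finally show ?thesis by simp
qed

text \<open>The trivial character contributes \<open>2\<^sup>|\<^sup>A\<^sup>|\<close>, the other \<open>p\<^sup>2 - 1\<close> at most
  \<open>2\<^sup>|\<^sup>A\<^sup>|/p\<^sup>2\<close> each.\<close>

lemma card_zero_sum_subsets_ge:
  assumes p: "prime p" and A: "A \<subseteq> Zp2 p"
    and small: "\<forall>u v. valid_frame p u v \<longrightarrow>
           (\<Prod>j \<in> Zp p. \<bar>cos (real_of_int j * pi / real p)\<bar> ^ lam p A u v j) \<le> 1 / (real p)\<^sup>2"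
  shows "2 ^ card A \<le> real p ^ 4 * card {B. B \<subseteq> A \<and> (\<Sum>b\<in>B. fst b) mod int p = 0 \<and> (\<Sum>b\<in>B. snd b) mod int p = 0}"
proof -
  define Z where "Z = {B. B \<subseteq> A \<and> (\<Sum>b\<in>B. fst b) mod int p = 0 \<and> (\<Sum>b\<in>B. snd b) mod int p = 0}"
  define P where "P k = (\<Prod>a\<in>A. 1 + omega p (fst k * fst a + snd k * snd a))" for k
  define n where "n = card A"
  have p0: "0 < p" using p prime_gt_0_nat by blast
  have fin2: "finite (Zp2 p)" unfolding Zp2_def by (simp add: finite_Zp)
  have fin: "finite A" using A fin2 finite_subset by blast
  have zero: "(0, 0) \<in> Zp2 p" unfolding Zp2_def Zp_def using p0 by auto
  have "card (Zp2 p) = p\<^sup>2" unfolding Zp2_def Zp_def by (simp add: card_cartesian_product power2_eq_square)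
  hence card_nz: "real (card (Zp2 p - {(0, 0)})) = (real p)\<^sup>2 - 1"
    using zero fin2 p0 by (simp add: of_nat_diff)
  have "(real p)\<^sup>2 * real (card Z) = Re (P (0, 0)) + (\<Sum>k\<in>Zp2 p - {(0, 0)}. Re (P k))"
    using arg_cong[OF card_zero_sum_subsets_fourier[OF p0 fin], of Re] zero fin2
    unfolding Z_def P_def by (simp add: Re_sum sum.remove)
  moreover have "Re (P (0, 0)) = 2 ^ n" unfolding P_def n_def by (simp add: omega_0)
  moreover have "(\<Sum>k\<in>Zp2 p - {(0, 0)}. - (2 ^ n / (real p)\<^sup>2)) \<le> (\<Sum>k\<in>Zp2 p - {(0, 0)}. Re (P k))"
  proof (rule sum_mono)
    fix k assume "k \<in> Zp2 p - {(0, 0)}"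
    thus "- (2 ^ n / (real p)\<^sup>2) \<le> Re (P k)"
      using norm_prod_1_plus_omega_le[OF p A _ _ small, of k] abs_Re_le_cmod[of "P k"]
      unfolding P_def n_def by fastforce
  qed
  moreover have "(\<Sum>k\<in>Zp2 p - {(0, 0)}. - (2 ^ n / (real p)\<^sup>2)) = - (((real p)\<^sup>2 - 1) * (2 ^ n / (real p)\<^sup>2))"
    using card_nz by simp
  ultimately have "2 ^ n - ((real p)\<^sup>2 - 1) * (2 ^ n / (real p)\<^sup>2) \<le> (real p)\<^sup>2 * real (card Z)"
    by linarith
  moreover have "2 ^ n - ((real p)\<^sup>2 - 1) * (2 ^ n / (real p)\<^sup>2) = 2 ^ n / (real p)\<^sup>2"
    using p0 by (simp add: field_simps)
  ultimately show ?thesis using p0 unfolding Z_def n_def by (simp add: field_simps power4_eq_xxxx power2_eq_square)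
qed

lemma power4_less_two_power: "17 \<le> n \<Longrightarrow> n ^ 4 < (2::nat) ^ n"
proof (induction n rule: dec_induct)
  case (step n)
  have n3: "n ^ 3 = n * n\<^sup>2" and n4: "n ^ 4 = n * n ^ 3" and n2: "n\<^sup>2 = n * n"
    by (simp_all add: power_def eval_nat_numeral)
  have "6 * n\<^sup>2 \<le> n ^ 3" unfolding n3 using step(1) by (intro mult_right_mono) auto
  moreover have "4 \<le> n * n" using step(1) mult_le_mono[of 17 n 17 n] by simp
  hence "4 * n \<le> n ^ 3" unfolding n3 n2 by (simp add: mult.commute mult_right_mono)
  moreover have "7 * n ^ 3 \<le> n ^ 4" unfolding n4 using step(1) by (intro mult_right_mono) auto
  moreover have "1 \<le> n ^ 3" using step(1) by simp
  moreover have "(Suc n) ^ 4 = n ^ 4 + 4 * n ^ 3 + 6 * n\<^sup>2 + 4 * n + 1"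
    by (simp add: power_def algebra_simps eval_nat_numeral)
  ultimately have "(Suc n) ^ 4 \<le> 2 * n ^ 4" by linarith
  thus ?case using step by simp
qed simp

lemma zero_sum_subset_condition2:
  assumes p: "prime p" "17 \<le> p" and A: "A \<subseteq> Zp2 p" "p \<le> card A"
    and small: "\<forall>u v. valid_frame p u v \<longrightarrow>
           (\<Prod>j \<in> Zp p. \<bar>cos (real_of_int j * pi / real p)\<bar> ^ lam p A u v j) \<le> 1 / (real p)\<^sup>2"
  shows "\<exists>B \<subseteq> A. B \<noteq> {} \<and> (\<Sum>b\<in>B. fst b) mod int p = 0 \<and> (\<Sum>b\<in>B. snd b) mod int p = 0"
proof -
  define Z where "Z = {B. B \<subseteq> A \<and> (\<Sum>b\<in>B. fst b) mod int p = 0 \<and> (\<Sum>b\<in>B. snd b) mod int p = 0}"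
  have "(2::nat) ^ p \<le> 2 ^ card A" by (rule power_increasing[OF A(2)]) simp
  hence "p ^ 4 < 2 ^ card A" by (rule less_le_trans[OF power4_less_two_power[OF p(2)]])
  hence "real (p ^ 4) < real (2 ^ card A)" by (simp only: of_nat_less_iff)
  also have "\<dots> \<le> real (p ^ 4) * real (card Z)"
    using card_zero_sum_subsets_ge[OF p(1) A(1) small] unfolding Z_def by simp
  finally have "real (p ^ 4) * 1 < real (p ^ 4) * real (card Z)" by simp
  hence "real 1 < real (card Z)" by (metis mult_less_cancel_left mult_zero_left not_less_zero of_nat_1 of_nat_0_le_iff)
  hence "1 < card Z" by (simp only: of_nat_less_iff)
  hence "\<not> Z \<subseteq> {{}}" using card_mono[of "{{}}" Z] by auto
  then obtain B where "B \<in> Z" "B \<noteq> {}" by auto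
  thus ?thesis unfolding Z_def by auto
qed

theorem lemma7:
  fixes p :: nat and A :: "(int \<times> int) set"
  assumes "prime p" and "p > 800"
    and "A \<subseteq> Zp2 p" and "card A = p + Ol p"
    and "(\<exists>u v. valid_frame p u v \<and>
           (let lm = lam p A u v; J = {j \<in> Zp p. odd (lm j)} in
            \<exists>I \<subseteq> Zp p. (\<forall>i \<in> I. lm i \<ge> 1) \<and> subset_sums p (I \<union> J) = Zp p \<and>
              (\<Sum>i \<in> Zp p. let ls = (if i \<in> I then lm i - 1 else lm i) in
                   (ls div 2) * ((ls + 1) div 2)) \<ge> p - 1))
       \<or> (\<forall>u v. valid_frame p u v \<longrightarrow>
           (\<Prod>j \<in> Zp p. \<bar>cos (real_of_int j * pi / real p)\<bar> ^ lam p A u v j) \<le> 1 / (real p)^2)"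
  shows "\<exists>B \<subseteq> A. B \<noteq> {} \<and> (\<Sum>b\<in>B. fst b) mod int p = 0 \<and> (\<Sum>b\<in>B. snd b) mod int p = 0"
  using assms(5)
proof
  assume "\<exists>u v. valid_frame p u v \<and>
           (let lm = lam p A u v; J = {j \<in> Zp p. odd (lm j)} in
            \<exists>I \<subseteq> Zp p. (\<forall>i \<in> I. lm i \<ge> 1) \<and> subset_sums p (I \<union> J) = Zp p \<and>
              (\<Sum>i \<in> Zp p. let ls = (if i \<in> I then lm i - 1 else lm i) in
                   (ls div 2) * ((ls + 1) div 2)) \<ge> p - 1)"
  then obtain u v I where "valid_frame p u v" "I \<subseteq> Zp p" "\<forall>i\<in>I. lam p A u v i \<ge> 1"
    "subset_sums p (I \<union> {j \<in> Zp p. odd (lam p A u v j)}) = Zp p"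
    "(\<Sum>i \<in> Zp p. let ls = (if i \<in> I then lam p A u v i - 1 else lam p A u v i) in
                   (ls div 2) * ((ls + 1) div 2)) \<ge> p - 1"
    unfolding Let_def by blast
  thus ?thesis by (rule zero_sum_subset_condition1[OF assms(1)])
next
  assume small: "\<forall>u v. valid_frame p u v \<longrightarrow>
           (\<Prod>j \<in> Zp p. \<bar>cos (real_of_int j * pi / real p)\<bar> ^ lam p A u v j) \<le> 1 / (real p)^2"
  show ?thesis by (rule zero_sum_subset_condition2[OF assms(1) _ assms(3) _ small]) (use assms(2,4) in auto)
qed

end
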